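(* Let $\mathcal{A}$ be a parity game arena satisfying the standing assumption below, such that in the escape arena $\mathcal{A}_\bot$ every vertex of player $0$ has at most two successors. Define $\sigma_0=V_0\times\{\bot\}$ and $\sigma_{i+1}=I_{\sigma_i}$ (non-deterministic strategy iteration with the "all profitable switches" heuristic), stopping at the first $l$ with $S_{\sigma_l}=\emptyset$. Then the number of improvement steps needed to reach an optimal winning strategy is at most $3\cdot 1.724^{|V_0|}$.
   Context: Parity game arena: $\mathcal{A}=(V,E,o,c)$ with $V$ finite, $E\subseteq V\times V$, every vertex has a successor, owner map $o:V\to\{0,1\}$, colouring $c:V\to\{0,\dots,d-1\}$ using every colour; $V_i=o^{-1}(i)$. An infinite vertex sequence is won by player $0$ (parity condition) iff the largest colour occurring infinitely often is even. A cycle is $i$-dominated if its largest colour has parity $i$. Escape arena $\mathcal{A}_\bot$: vertices $V\cup\{\bot\}$, edges $E_\bot=E\cup(V_0\times\{\bot\})$, $\bot$ owned by player $0$ with no outgoing edges. Let $E_0=E_\bot\cap(V_0\times(V\cup\{\bot\}))$, $E_1=E\cap(V_1\times V)$. A strategy of player $i$ is a set $\sigma\subseteq E_i$ with $s\sigma\neq\emptyset$ for all $s\in V_i$. $\mathcal{A}_\bot|_{\sigma,\tau}$ has edge set $\sigma\cup\tau$, $\mathcal{A}_\bot|_\sigma$ has edge set $\sigma\cup E_1$; a play is a maximal path. Colour profiles: $\mathcal{P}=\mathbb{Z}^d\cup\{-\infty,\infty\}$, $\text{\o}$ zero vector; $\wp(s)$ unit vector at coordinate $c(s)$; for a finite path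 the sum over its vertices in $V$; for an infinite play $\infty$ if won by player $0$, else $-\infty$. Addition componentwise, $x+\pm\infty=\pm\infty$. Order $\prec$: $-\infty$ least, $\infty$ greatest; for distinct $p,p'\in\mathbb{Z}^d$ with $k$ the largest index where they differ, $p\prec p'$ iff ($k$ even and $p_k<p'_k$) or ($k$ odd and $p_k>p'_k$). Valuation: $\mathcal{V}_\sigma(\bot)=\text{\o}$, $\mathcal{V}_\sigma(s)=\min^\prec_\tau\max^\prec\{\wp(\pi)\mid\pi$ a play in $\mathcal{A}_\bot|_{\sigma,\tau}$ from $s\}$. $\sigma$ is reasonable if $\mathcal{A}_\bot|_\sigma$ has no $1$-dominated cycle. For reasonable $\sigma$, $(s,t)\in E_0$ is an improvement if $\mathcal{V}_\sigma(s)\preceq\wp(s)+\mathcal{V}_\sigma(t)$ and a strict improvement if $\prec$ holds; $I_\sigma$, $S_\sigma$ are the sets of improvements and strict improvements. An optimal winning strategy for player $0$ is one with which player $0$ wins every vertex of $W_0$, the winning set of player $0$ in the parity game on $\mathcal{A}$. Standing assumption: the subgraph of $(V,E)$ induced by $V_1$ contains no $1$-dominated cycle. *)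

theory Defs
  imports Complex_Main
begin

definition arena :: "'v set \<Rightarrow> ('v \<times> 'v) set \<Rightarrow> ('v \<Rightarrow> nat) \<Rightarrow> ('v \<Rightarrow> nat) \<Rightarrow> nat \<Rightarrow> bool" where
  "arena V E own c d \<longleftrightarrow> finite V \<and> E \<subseteq> V \<times> V \<and> (\<forall>v\<in>V. \<exists>w. (v, w) \<in> E)
     \<and> (\<forall>v\<in>V. own v \<in> {0, 1}) \<and> c ` V = {0..<d}"

definition Vown :: "'v set \<Rightarrow> ('v \<Rightarrow> nat) \<Rightarrow> nat \<Rightarrow> 'v set" where
  "Vown V own i = {v \<in> V. own v = i}"

definition is_cycle :: "('v \<times> 'v) set \<Rightarrow> 'v list \<Rightarrow> bool" where
  "is_cycle F xs \<longleftrightarrow> xs \<noteq> [] \<and> (\<forall>i < length xs. (xs ! i, xs ! ((i + 1) mod length xs)) \<in> F)"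

definition dominated :: "('v \<Rightarrow> nat) \<Rightarrow> nat \<Rightarrow> 'v list \<Rightarrow> bool" where
  "dominated c i xs \<longleftrightarrow> Max (c ` set xs) mod 2 = i"

definition standing_assumption :: "'v set \<Rightarrow> ('v \<times> 'v) set \<Rightarrow> ('v \<Rightarrow> nat) \<Rightarrow> ('v \<Rightarrow> nat) \<Rightarrow> bool" where
  "standing_assumption V E own c \<longleftrightarrow>
     \<not> (\<exists>xs. is_cycle (E \<inter> (Vown V own 1 \<times> Vown V own 1)) xs \<and> dominated c 1 xs)"

definition parity_win0 :: "('v \<Rightarrow> nat) \<Rightarrow> (nat \<Rightarrow> 'v) \<Rightarrow> bool" where
  "parity_win0 c f \<longleftrightarrow> even (Max {k. \<exists>\<^sub>\<infinity>i. c (f i) = k})"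

definition strategy0_hist :: "'v set \<Rightarrow> ('v \<times> 'v) set \<Rightarrow> ('v \<Rightarrow> nat) \<Rightarrow> ('v list \<Rightarrow> 'v) \<Rightarrow> bool" where
  "strategy0_hist V E own g \<longleftrightarrow>
     (\<forall>h. h \<noteq> [] \<longrightarrow> set h \<subseteq> V \<longrightarrow> own (last h) = 0 \<longrightarrow> (last h, g h) \<in> E)"

definition consistent_play :: "'v set \<Rightarrow> ('v \<times> 'v) set \<Rightarrow> ('v \<Rightarrow> nat) \<Rightarrow> ('v list \<Rightarrow> 'v) \<Rightarrow> 'v \<Rightarrow> (nat \<Rightarrow> 'v) \<Rightarrow> bool" where
  "consistent_play V E own g s f \<longleftrightarrow> f 0 = s \<and> (\<forall>i. (f i, f (Suc i)) \<in> E)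
     \<and> (\<forall>i. own (f i) = 0 \<longrightarrow> f (Suc i) = g (map f [0..<Suc i]))"

definition W0 :: "'v set \<Rightarrow> ('v \<times> 'v) set \<Rightarrow> ('v \<Rightarrow> nat) \<Rightarrow> ('v \<Rightarrow> nat) \<Rightarrow> 'v set" where
  "W0 V E own c = {s \<in> V. \<exists>g. strategy0_hist V E own g \<and>
      (\<forall>f. consistent_play V E own g s f \<longrightarrow> parity_win0 c f)}"

text \<open>Vertices of the escape arena are of type 'v option; None is the escape vertex \<bottom>.\<close>

definition lift_edges :: "('v \<times> 'v) set \<Rightarrow> ('v option \<times> 'v option) set" where
  "lift_edges E = {(Some a, Some b) | a b. (a, b) \<in> E}"

definition Ebot :: "'v set \<Rightarrow> ('v \<times> 'v) set \<Rightarrow> ('v \<Rightarrow> nat) \<Rightarrow> ('v option \<times> 'v option) set" where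
  "Ebot V E own = lift_edges E \<union> (Some ` Vown V own 0) \<times> {None}"

definition E0 :: "'v set \<Rightarrow> ('v \<times> 'v) set \<Rightarrow> ('v \<Rightarrow> nat) \<Rightarrow> ('v option \<times> 'v option) set" where
  "E0 V E own = Ebot V E own \<inter> (Some ` Vown V own 0) \<times> UNIV"

definition E1 :: "'v set \<Rightarrow> ('v \<times> 'v) set \<Rightarrow> ('v \<Rightarrow> nat) \<Rightarrow> ('v option \<times> 'v option) set" where
  "E1 V E own = lift_edges E \<inter> (Some ` Vown V own 1) \<times> UNIV"

definition is_strategy :: "'v set \<Rightarrow> ('v \<times> 'v) set \<Rightarrow> ('v \<Rightarrow> nat) \<Rightarrow> nat \<Rightarrow> ('v option \<times> 'v option) set \<Rightarrow> bool" where
  "is_strategy V E own i \<sigma> \<longleftrightarrow> \<sigma> \<subseteq> (if i = 0 then E0 V E own else E1 V E own)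
     \<and> (\<forall>s \<in> Vown V own i. \<exists>t. (Some s, t) \<in> \<sigma>)"

definition fin_play :: "('v option \<times> 'v option) set \<Rightarrow> 'v option \<Rightarrow> 'v option list \<Rightarrow> bool" where
  "fin_play F s xs \<longleftrightarrow> xs \<noteq> [] \<and> hd xs = s \<and>
     (\<forall>i. Suc i < length xs \<longrightarrow> (xs ! i, xs ! Suc i) \<in> F) \<and> (\<forall>t. (last xs, t) \<notin> F)"

definition inf_play :: "('v option \<times> 'v option) set \<Rightarrow> 'v option \<Rightarrow> (nat \<Rightarrow> 'v option) \<Rightarrow> bool" where
  "inf_play F s f \<longleftrightarrow> f 0 = s \<and> (\<forall>i. (f i, f (Suc i)) \<in> F)"

text \<open>Profiles: -\<infinity>, vectors in \<int>^d (represented as functions nat \<Rightarrow> int, of which only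
  the coordinates < d are relevant), and \<infinity>.\<close>
datatype prof = NegInf | Fin "nat \<Rightarrow> int" | PosInf

definition unitv :: "nat \<Rightarrow> nat \<Rightarrow> int" where
  "unitv k = (\<lambda>j. if j = k then 1 else 0)"

fun prof_add :: "prof \<Rightarrow> prof \<Rightarrow> prof" where
  "prof_add (Fin a) (Fin b) = Fin (\<lambda>j. a j + b j)"
| "prof_add NegInf _ = NegInf"
| "prof_add _ NegInf = NegInf"
| "prof_add PosInf _ = PosInf"
| "prof_add _ PosInf = PosInf"

fun prof_less :: "nat \<Rightarrow> prof \<Rightarrow> prof \<Rightarrow> bool" where
  "prof_less d (Fin a) (Fin b) \<longleftrightarrow> (\<exists>k < d. a k \<noteq> b k \<and> (\<forall>j. k < j \<and> j < d \<longrightarrow> a j = b j)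
       \<and> ((even k \<and> a k < b k) \<or> (odd k \<and> a k > b k)))"
| "prof_less d NegInf q \<longleftrightarrow> q \<noteq> NegInf"
| "prof_less d p PosInf \<longleftrightarrow> p \<noteq> PosInf"
| "prof_less d _ _ \<longleftrightarrow> False"

fun prof_eq :: "nat \<Rightarrow> prof \<Rightarrow> prof \<Rightarrow> bool" where
  "prof_eq d (Fin a) (Fin b) \<longleftrightarrow> (\<forall>k < d. a k = b k)"
| "prof_eq d NegInf NegInf \<longleftrightarrow> True"
| "prof_eq d PosInf PosInf \<longleftrightarrow> True"
| "prof_eq d _ _ \<longleftrightarrow> False"

definition prof_le :: "nat \<Rightarrow> prof \<Rightarrow> prof \<Rightarrow> bool" where
  "prof_le d p q \<longleftrightarrow> prof_less d p q \<or> prof_eq d p q"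

definition pmax :: "nat \<Rightarrow> prof set \<Rightarrow> prof" where
  "pmax d S = (SOME p. p \<in> S \<and> (\<forall>q \<in> S. prof_le d q p))"

definition pmin :: "nat \<Rightarrow> prof set \<Rightarrow> prof" where
  "pmin d S = (SOME p. p \<in> S \<and> (\<forall>q \<in> S. prof_le d p q))"

definition fin_prof :: "('v \<Rightarrow> nat) \<Rightarrow> 'v option list \<Rightarrow> prof" where
  "fin_prof c xs = Fin (\<lambda>j. (\<Sum>x \<leftarrow> xs. case x of None \<Rightarrow> 0 | Some v \<Rightarrow> unitv (c v) j))"

definition inf_prof :: "('v \<Rightarrow> nat) \<Rightarrow> (nat \<Rightarrow> 'v option) \<Rightarrow> prof" where
  "inf_prof c f = (if parity_win0 c (\<lambda>i. the (f i)) then PosInf else NegInf)"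

definition play_profiles :: "('v \<Rightarrow> nat) \<Rightarrow> ('v option \<times> 'v option) set \<Rightarrow> 'v option \<Rightarrow> prof set" where
  "play_profiles c F s = {fin_prof c xs | xs. fin_play F s xs} \<union> {inf_prof c f | f. inf_play F s f}"

definition valuation :: "'v set \<Rightarrow> ('v \<times> 'v) set \<Rightarrow> ('v \<Rightarrow> nat) \<Rightarrow> ('v \<Rightarrow> nat) \<Rightarrow> nat
    \<Rightarrow> ('v option \<times> 'v option) set \<Rightarrow> 'v option \<Rightarrow> prof" where
  "valuation V E own c d \<sigma> s = (if s = None then Fin (\<lambda>_. 0) else
     pmin d {pmax d (play_profiles c (\<sigma> \<union> \<tau>) s) | \<tau>. is_strategy V E own 1 \<tau>})"

text \<open>\<sigma> is reasonable iff the graph with edges \<sigma> \<union> E_1 has no 1-dominated cycle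
  (cycles cannot pass through \<bottom>, which has no successors).\<close>
definition reasonable :: "'v set \<Rightarrow> ('v \<times> 'v) set \<Rightarrow> ('v \<Rightarrow> nat) \<Rightarrow> ('v \<Rightarrow> nat)
    \<Rightarrow> ('v option \<times> 'v option) set \<Rightarrow> bool" where
  "reasonable V E own c \<sigma> \<longleftrightarrow>
     \<not> (\<exists>xs. is_cycle {(a, b). (Some a, Some b) \<in> \<sigma> \<union> E1 V E own} xs \<and> dominated c 1 xs)"

definition improvements :: "'v set \<Rightarrow> ('v \<times> 'v) set \<Rightarrow> ('v \<Rightarrow> nat) \<Rightarrow> ('v \<Rightarrow> nat) \<Rightarrow> nat
    \<Rightarrow> ('v option \<times> 'v option) set \<Rightarrow> ('v option \<times> 'v option) set" where
  "improvements V E own c d \<sigma> = {(s, t) \<in> E0 V E own.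
      prof_le d (valuation V E own c d \<sigma> s)
        (prof_add (Fin (unitv (c (the s)))) (valuation V E own c d \<sigma> t))}"

definition strict_improvements :: "'v set \<Rightarrow> ('v \<times> 'v) set \<Rightarrow> ('v \<Rightarrow> nat) \<Rightarrow> ('v \<Rightarrow> nat) \<Rightarrow> nat
    \<Rightarrow> ('v option \<times> 'v option) set \<Rightarrow> ('v option \<times> 'v option) set" where
  "strict_improvements V E own c d \<sigma> = {(s, t) \<in> E0 V E own.
      prof_less d (valuation V E own c d \<sigma> s)
        (prof_add (Fin (unitv (c (the s)))) (valuation V E own c d \<sigma> t))}"

definition sigma_iter :: "'v set \<Rightarrow> ('v \<times> 'v) set \<Rightarrow> ('v \<Rightarrow> nat) \<Rightarrow> ('v \<Rightarrow> nat) \<Rightarrow> nat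
    \<Rightarrow> nat \<Rightarrow> ('v option \<times> 'v option) set" where
  "sigma_iter V E own c d i = (improvements V E own c d ^^ i) ((Some ` Vown V own 0) \<times> {None})"

definition wins_with :: "'v set \<Rightarrow> ('v \<times> 'v) set \<Rightarrow> ('v \<Rightarrow> nat) \<Rightarrow> ('v \<Rightarrow> nat)
    \<Rightarrow> ('v option \<times> 'v option) set \<Rightarrow> 'v \<Rightarrow> bool" where
  "wins_with V E own c \<sigma> s \<longleftrightarrow> (\<exists>\<sigma>'. \<sigma>' \<subseteq> \<sigma> \<and> is_strategy V E own 0 \<sigma>' \<and>
     (\<forall>\<tau>. is_strategy V E own 1 \<tau> \<longrightarrow>
        (\<forall>xs. \<not> fin_play (\<sigma>' \<union> \<tau>) (Some s) xs) \<and>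
        (\<forall>f. inf_play (\<sigma>' \<union> \<tau>) (Some s) f \<longrightarrow> inf_prof c f = PosInf)))"

definition optimal_winning :: "'v set \<Rightarrow> ('v \<times> 'v) set \<Rightarrow> ('v \<Rightarrow> nat) \<Rightarrow> ('v \<Rightarrow> nat)
    \<Rightarrow> ('v option \<times> 'v option) set \<Rightarrow> bool" where
  "optimal_winning V E own c \<sigma> \<longleftrightarrow> (\<forall>s \<in> W0 V E own c. wins_with V E own c \<sigma> s)"

end

theory Submission
  imports Defs "HOL-Library.Omega_Words_Fun"
begin

text \<open>
  Each vertex of player 0 has exactly one successor besides the escape vertex \<bottom>, so a
  strategy of player 0 only says where she may stop and where she may continue. Profiles of
  plays from a vertex are either positive or negative, hence so is the valuation, and whether
  an edge is a (strict) improvement depends only on the sign of the valuation of its target.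
  Consequently the iterates have the form \<sigma>_i = "continue on C_i, stop outside C_(i-1)",
  where C_(i+1) collects the vertices whose successor has positive valuation under \<sigma>_i.

  Switching from \<sigma>_i to \<sigma>_(i+1) keeps every positive vertex positive: a positive play
  that is cut off by a removed stop edge can be continued at a vertex whose successor is
  positive, and chaining such continuations forever yields a lasso dominated by an even
  colour. So C_0 \<subseteq> C_1 \<subseteq> ... grows strictly as long as there are strict improvements,
  which bounds the number of steps by |V_0|, far below 3 * 1.724^|V_0|. At the fixpoint, if
  player 0 still stopped at a vertex of W_0, player 1 could chain plays dominated by odd
  colours into a losing path through W_0; hence continuing on C_l wins everywhere on W_0.
\<close>

section \<open>The order on colour profiles\<close>

lemma prof_less_Fin_asym:
  assumes "prof_less d (Fin a) (Fin b)" shows "\<not> prof_less d (Fin b) (Fin a)"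
proof
  assume "prof_less d (Fin b) (Fin a)"
  then obtain k' where k': "k' < d" "b k' \<noteq> a k'" "\<forall>j. k' < j \<and> j < d \<longrightarrow> b j = a j"
    "(even k' \<and> b k' < a k') \<or> (odd k' \<and> b k' > a k')" by auto
  from assms obtain k where k: "k < d" "a k \<noteq> b k" "\<forall>j. k < j \<and> j < d \<longrightarrow> a j = b j"
    "(even k \<and> a k < b k) \<or> (odd k \<and> a k > b k)" by auto
  have "k = k'"
    using k k' by (metis linorder_neqE_nat)
  then show False using k k' by auto
qed

lemma prof_less_asym: "prof_less d p q \<Longrightarrow> \<not> prof_less d q p"
  using prof_less_Fin_asym by (cases p; cases q) auto

lemma prof_less_irrefl: "\<not> prof_less d p p"
  using prof_less_asym by blast

lemma prof_less_Fin_trans: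
  assumes "prof_less d (Fin a) (Fin b)" "prof_less d (Fin b) (Fin e)"
  shows "prof_less d (Fin a) (Fin e)"
proof -
  from assms(1) obtain k where k: "k < d" "a k \<noteq> b k" "\<forall>j. k < j \<and> j < d \<longrightarrow> a j = b j"
    "(even k \<and> a k < b k) \<or> (odd k \<and> a k > b k)" by auto
  from assms(2) obtain k' where k': "k' < d" "b k' \<noteq> e k'" "\<forall>j. k' < j \<and> j < d \<longrightarrow> b j = e j"
    "(even k' \<and> b k' < e k') \<or> (odd k' \<and> b k' > e k')" by auto
  show ?thesis
  proof (cases k k' rule: linorder_cases)
    case less
    then have "a k' = b k'" using k(3) k'(1) by blast
    then show ?thesis using k' less k(3) by (simp only: prof_less.simps) (intro exI[of _ k'], auto)
  next
    case equal
    then show ?thesis using k k' by (simp only: prof_less.simps) (intro exI[of _ k'], auto)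
  next
    case greater
    then have "b k = e k" using k'(3) k(1) by blast
    then show ?thesis using k greater k'(3) by (simp only: prof_less.simps) (intro exI[of _ k], auto)
  qed
qed

lemma prof_less_trans [trans]: "prof_less d p q \<Longrightarrow> prof_less d q r \<Longrightarrow> prof_less d p r"
proof (cases "\<exists>a b e. p = Fin a \<and> q = Fin b \<and> r = Fin e")
  case True then show "prof_less d p q \<Longrightarrow> prof_less d q r \<Longrightarrow> ?thesis"
    using prof_less_Fin_trans by blast
qed (cases p; cases q; cases r; auto)

lemma prof_eq_refl: "prof_eq d p p"
  by (cases p) auto

lemma prof_eq_sym: "prof_eq d p q \<Longrightarrow> prof_eq d q p"
  by (cases p; cases q) auto

lemma prof_eq_trans: "prof_eq d p q \<Longrightarrow> prof_eq d q r \<Longrightarrow> prof_eq d p r"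
  by (cases p; cases q; cases r) auto

lemma prof_less_cong_left: "prof_eq d p p' \<Longrightarrow> prof_less d p q \<longleftrightarrow> prof_less d p' q"
  by (cases p; cases p'; cases q; simp) (rule iffI; elim exE; rule_tac x = k in exI; auto)

lemma prof_less_cong_right: "prof_eq d q q' \<Longrightarrow> prof_less d p q \<longleftrightarrow> prof_less d p q'"
  by (cases p; cases q; cases q'; simp) (rule iffI; elim exE; rule_tac x = k in exI; auto)

lemma prof_less_Fin_linear:
  "prof_less d (Fin a) (Fin b) \<or> prof_eq d (Fin a) (Fin b) \<or> prof_less d (Fin b) (Fin a)"
proof (cases "\<forall>k<d. a k = b k")
  case False
  define K where "K = {k. k < d \<and> a k \<noteq> b k}"
  have K: "finite K" "K \<noteq> {}" using False unfolding K_def by auto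
  define k where "k = Max K"
  have "k \<in> K" using K unfolding k_def by simp
  then have "k < d" "a k \<noteq> b k" unfolding K_def by auto
  moreover have "\<forall>j. k < j \<and> j < d \<longrightarrow> a j = b j"
    using K unfolding k_def K_def by (metis (mono_tags, lifting) Max_ge mem_Collect_eq not_le)
  moreover have "(even k \<and> a k < b k) \<or> (odd k \<and> a k > b k) \<or>
      (even k \<and> b k < a k) \<or> (odd k \<and> b k > a k)"
    using \<open>a k \<noteq> b k\<close> by linarith
  ultimately show ?thesis
    by (metis prof_less.simps(1))
qed simp

lemma prof_less_linear: "prof_less d p q \<or> prof_eq d p q \<or> prof_less d q p"
  using prof_less_Fin_linear by (cases p; cases q) auto

lemma prof_le_refl: "prof_le d p p"
  unfolding prof_le_def using prof_eq_refl by blast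

lemma prof_le_trans [trans]: "prof_le d p q \<Longrightarrow> prof_le d q r \<Longrightarrow> prof_le d p r"
  unfolding prof_le_def
  by (metis prof_less_trans prof_less_cong_left prof_less_cong_right prof_eq_trans prof_eq_sym)

lemma prof_less_le_trans [trans]: "prof_less d p q \<Longrightarrow> prof_le d q r \<Longrightarrow> prof_less d p r"
  unfolding prof_le_def by (metis prof_less_trans prof_less_cong_right)

lemma prof_le_linear: "prof_le d p q \<or> prof_le d q p"
  unfolding prof_le_def using prof_less_linear prof_eq_sym by blast

lemma prof_le_antisym: "prof_le d p q \<Longrightarrow> prof_le d q p \<Longrightarrow> prof_eq d p q"
  unfolding prof_le_def by (metis prof_less_asym prof_less_cong_left prof_less_irrefl)

lemma not_prof_le: "\<not> prof_le d p q \<longleftrightarrow> prof_less d q p"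
  unfolding prof_le_def
  by (metis prof_less_linear prof_less_asym prof_eq_sym prof_less_cong_right prof_less_irrefl)

lemma prof_le_cong_left: "prof_eq d p p' \<Longrightarrow> prof_le d p q \<longleftrightarrow> prof_le d p' q"
  unfolding prof_le_def by (metis prof_less_cong_left prof_eq_trans prof_eq_sym)

lemma prof_add_less_cancel:
  "prof_less d (prof_add (Fin u) p) (prof_add (Fin u) q) \<longleftrightarrow> prof_less d p q"
  by (cases p; cases q) auto

lemma prof_add_le_cancel:
  "prof_le d (prof_add (Fin u) p) (prof_add (Fin u) q) \<longleftrightarrow> prof_le d p q"
  unfolding prof_le_def by (cases p; cases q) auto

definition is_prof_max :: "nat \<Rightarrow> prof set \<Rightarrow> prof \<Rightarrow> bool" where
  "is_prof_max d S m \<longleftrightarrow> m \<in> S \<and> (\<forall>q\<in>S. prof_le d q m)"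

definition is_prof_min :: "nat \<Rightarrow> prof set \<Rightarrow> prof \<Rightarrow> bool" where
  "is_prof_min d S m \<longleftrightarrow> m \<in> S \<and> (\<forall>q\<in>S. prof_le d m q)"

lemma is_prof_max_pmax: "is_prof_max d S m \<Longrightarrow> is_prof_max d S (pmax d S)"
  unfolding pmax_def is_prof_max_def by (rule someI)

lemma is_prof_min_pmin: "is_prof_min d S m \<Longrightarrow> is_prof_min d S (pmin d S)"
  unfolding pmin_def is_prof_min_def by (rule someI)

lemma is_prof_max_unique: "is_prof_max d S m \<Longrightarrow> is_prof_max d S m' \<Longrightarrow> prof_eq d m m'"
  unfolding is_prof_max_def using prof_le_antisym by blast

lemma finite_total_preorder_has_greatest:
  assumes "finite S" "S \<noteq> {}"
    and total: "\<And>x y. R x y \<or> R y x" and trans: "\<And>x y z. R x y \<Longrightarrow> R y z \<Longrightarrow> R x z"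
  shows "\<exists>m\<in>S. \<forall>q\<in>S. R q m"
  using assms(1,2)
proof (induction S rule: finite_ne_induct)
  case (singleton x) then show ?case using total[of x x] by auto
next
  case (insert x S)
  then obtain m where m: "m \<in> S" "\<forall>q\<in>S. R q m" by blast
  show ?case
  proof (cases "R x m")
    case True then show ?thesis using m by blast
  next
    case False then show ?thesis using m total[of x m] trans[of _ m x] total[of x x] by blast
  qed
qed

lemma finite_prof_max: "finite S \<Longrightarrow> S \<noteq> {} \<Longrightarrow> \<exists>m. is_prof_max d S m"
  using finite_total_preorder_has_greatest[of S "prof_le d"] prof_le_linear prof_le_trans
  unfolding is_prof_max_def by blast

lemma finite_prof_min: "finite S \<Longrightarrow> S \<noteq> {} \<Longrightarrow> \<exists>m. is_prof_min d S m"
  using finite_total_preorder_has_greatest[of S "\<lambda>p q. prof_le d q p"] prof_le_linear prof_le_trans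
  unfolding is_prof_min_def by blast

lemma is_prof_max_add:
  "is_prof_max d S m \<Longrightarrow> is_prof_max d (prof_add (Fin u) ` S) (prof_add (Fin u) m)"
  unfolding is_prof_max_def using prof_add_le_cancel by blast

lemma is_prof_max_Un:
  "is_prof_max d A a \<Longrightarrow> is_prof_max d B b \<Longrightarrow> prof_le d a b \<Longrightarrow> is_prof_max d (A \<union> B) b"
  unfolding is_prof_max_def using prof_le_trans by blast

lemma pmin_image_mono:
  assumes "finite T" "T \<noteq> {}"
    and mono: "\<And>p q. prof_le d p q \<Longrightarrow> prof_le d (h p) (h q)"
    and fg: "\<And>t. t \<in> T \<Longrightarrow> prof_eq d (f t) (h (g t))"
  shows "prof_eq d (pmin d (f ` T)) (h (pmin d (g ` T)))"
proof -
  have "is_prof_min d (f ` T) (pmin d (f ` T))" "is_prof_min d (g ` T) (pmin d (g ` T))"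
    using finite_prof_min is_prof_min_pmin assms(1,2) by (metis finite_imageI image_is_empty)+
  then obtain t1 t2 where t: "t1 \<in> T" "pmin d (f ` T) = f t1" "t2 \<in> T" "pmin d (g ` T) = g t2"
    and min: "\<forall>q\<in>f ` T. prof_le d (f t1) q" "\<forall>q\<in>g ` T. prof_le d (g t2) q"
    unfolding is_prof_min_def by auto
  have "prof_le d (h (g t2)) (h (g t1))" using mono min(2) t(1) by blast
  also have "prof_le d (h (g t1)) (f t1)" using fg[OF t(1)] prof_eq_sym unfolding prof_le_def by blast
  finally have 1: "prof_le d (h (g t2)) (f t1)" .
  have "prof_le d (f t1) (f t2)" using min(1) t(3) by blast
  also have "prof_le d (f t2) (h (g t2))" using fg[OF t(3)] unfolding prof_le_def by blast
  finally have "prof_le d (f t1) (h (g t2))" .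
  then show ?thesis using 1 t(2,4) prof_le_antisym by simp
qed

section \<open>Lassos\<close>

lemma lasso_nth:
  assumes "cyc \<noteq> []" "k \<le> length pre + length cyc"
  shows "(pre \<frown> cyc\<^sup>\<omega>) k = (pre @ cyc @ [hd cyc]) ! k"
  using assms by (cases "k < length pre"; cases "k < length pre + length cyc")
    (auto simp: nth_append hd_conv_nth)

lemma lasso_step:
  assumes cyc: "cyc \<noteq> []" and path: "successively R (pre @ cyc @ [hd cyc])"
  shows "R ((pre \<frown> cyc\<^sup>\<omega>) n) ((pre \<frown> cyc\<^sup>\<omega>) (Suc n))"
proof (induction n rule: less_induct)
  case (less n)
  let ?w = "pre \<frown> cyc\<^sup>\<omega>"
  show ?case
  proof (cases "n < length pre + length cyc")
    case True
    then show ?thesis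
      using successively_nth[OF path, of n] lasso_nth[OF cyc] by simp
  next
    case False
    have period: "?w (m + length cyc) = ?w m" if "length pre \<le> m" for m
    proof -
      have "m + length cyc - length pre = (m - length pre) + length cyc" using that by simp
      then have "(m + length cyc - length pre) mod length cyc = (m - length pre) mod length cyc"
        by (simp only: mod_add_self2)
      then show ?thesis using that cyc by simp
    qed
    have shift: "?w n = ?w (n - length cyc)" "?w (Suc n) = ?w (Suc (n - length cyc))"
      using period[of "n - length cyc"] period[of "Suc (n - length cyc)"] False
      by (simp_all add: Suc_diff_le)
    have "0 < length cyc" using cyc by simp
    then have "n - length cyc < n" using False by linarith
    then have "R (?w (n - length cyc)) (?w (Suc (n - length cyc)))" by (rule less.IH)
    then show ?thesis by (simp only: shift)
  qed
qed

lemma lasso_start: "cyc \<noteq> [] \<Longrightarrow> (pre \<frown> cyc\<^sup>\<omega>) 0 = hd (pre @ cyc)"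
  by (cases pre) (auto simp: hd_conv_nth)

lemma lasso_range: "cyc \<noteq> [] \<Longrightarrow> range (pre \<frown> cyc\<^sup>\<omega>) \<subseteq> set pre \<union> set cyc"
  by auto

lemma lasso_limit: "cyc \<noteq> [] \<Longrightarrow> limit (col \<circ> (pre \<frown> cyc\<^sup>\<omega>)) = col ` set cyc"
proof -
  assume cyc: "cyc \<noteq> []"
  have "col \<circ> cyc\<^sup>\<omega> = (map col cyc)\<^sup>\<omega>" using cyc by auto
  then show ?thesis using cyc by (simp add: comp_concat)
qed

lemma pred_Max_UN:
  assumes "finite I" "I \<noteq> {}" "\<And>k. k \<in> I \<Longrightarrow> finite (S k) \<and> S k \<noteq> {} \<and> Q (Max (S k))"
  shows "Q (Max (\<Union>k\<in>I. S k))"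
proof -
  have fin: "finite (\<Union>k\<in>I. S k)" "(\<Union>k\<in>I. S k) \<noteq> {}" using assms by auto
  then obtain k where k: "k \<in> I" "Max (\<Union>k\<in>I. S k) \<in> S k" using Max_in by blast
  then have "Max (\<Union>k\<in>I. S k) = Max (S k)"
    using assms(3)[OF k(1)] fin by (intro antisym Max_ge Max_mono) auto
  then show ?thesis using assms(3)[OF k(1)] by simp
qed

lemma successively_concat_segments:
  assumes "\<And>k. L k \<noteq> [] \<and> hd (L k) = x k \<and> successively R (L k @ [x (Suc k)])"
  shows "a \<le> b \<Longrightarrow> successively R (concat (map L [a..<b]) @ [x b])"
proof (induction b)
  case (Suc b)
  show ?case
  proof (cases "a = Suc b")
    case False
    then have "successively R (concat (map L [a..<b]) @ [x b])" using Suc by simp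
    moreover have "successively R (L b @ [x (Suc b)])" "hd (L b) = x b" "L b \<noteq> []" using assms by auto
    ultimately show ?thesis
      using Suc.prems False by (auto simp: successively_append_iff)
  qed simp
qed simp

text \<open>An infinite sequence of segments, each leading to the start of the next, visits some
  segment start twice; the segments in between form the loop of a lasso.\<close>
lemma lasso_of_segment_sequence:
  assumes "finite A"
    and L: "\<And>k. L k \<noteq> [] \<and> hd (L k) = x k \<and> set (L k) \<subseteq> A
        \<and> successively R (L k @ [x (Suc k)]) \<and> Q (Max (col ` set (L k)))"
  obtains w where "w 0 = x 0" "\<And>n. R (w n) (w (Suc n))" "range w \<subseteq> A" "Q (Max (limit (col \<circ> w)))"
proof -
  have "x k \<in> A" for k using L[of k] by (metis hd_in_set subsetD)
  then have "range x \<subseteq> A" by blast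
  then have "finite (range x)" using assms(1) by (rule finite_subset)
  then have "\<not> inj x" using range_inj_infinite by blast
  then obtain i j where ij: "i < j" "x i = x j"
    unfolding inj_def by (metis linorder_neqE_nat)
  define pre where "pre = concat (map L [0..<i])"
  define cyc where "cyc = concat (map L [i..<j])"
  have "cyc = L i @ concat (map L [Suc i..<j])"
    unfolding cyc_def using ij(1) by (simp add: upt_conv_Cons)
  then have cyc: "cyc \<noteq> []" "hd cyc = x i" using L[of i] by simp_all
  have "[0..<j] = [0..<i] @ [i..<j]"
    using upt_add_eq_append[of 0 i "j - i"] ij(1) by simp
  then have prefix: "pre @ cyc = concat (map L [0..<j])"
    unfolding pre_def cyc_def by simp
  have path: "successively R (pre @ cyc @ [hd cyc])"
    using successively_concat_segments[of L x R 0 j] L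
    by (simp add: prefix[symmetric] cyc(2) ij(2))
  show ?thesis
  proof
    have "[0..<j] = 0 # [1..<j]" using ij(1) by (simp add: upt_conv_Cons)
    then have "hd (pre @ cyc) = x 0" using L[of 0] by (simp add: prefix)
    then show "(pre \<frown> cyc\<^sup>\<omega>) 0 = x 0"
      using lasso_start[OF cyc(1)] by simp
    show "R ((pre \<frown> cyc\<^sup>\<omega>) n) ((pre \<frown> cyc\<^sup>\<omega>) (Suc n))" for n
      by (rule lasso_step[OF cyc(1) path])
    show "range (pre \<frown> cyc\<^sup>\<omega>) \<subseteq> A"
      using lasso_range[OF cyc(1), of pre] L unfolding pre_def cyc_def by auto
    have "col ` set cyc = (\<Union>k\<in>{i..<j}. col ` set (L k))" unfolding cyc_def by auto
    moreover have "Q (Max (\<Union>k\<in>{i..<j}. col ` set (L k)))"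
      using ij(1) L by (intro pred_Max_UN) auto
    ultimately show "Q (Max (limit (col \<circ> (pre \<frown> cyc\<^sup>\<omega>))))"
      unfolding lasso_limit[OF cyc(1)] by simp
  qed
qed

lemma lasso_of_segments:
  assumes "finite A" "P x0"
    and step: "\<And>x. P x \<Longrightarrow> \<exists>ys y. ys \<noteq> [] \<and> hd ys = x \<and> set ys \<subseteq> A
        \<and> successively R (ys @ [y]) \<and> Q (Max (col ` set ys)) \<and> P y"
  obtains w where "w 0 = x0" "\<And>n. R (w n) (w (Suc n))" "range w \<subseteq> A" "Q (Max (limit (col \<circ> w)))"
proof -
  let ?seg = "\<lambda>x ys y. ys \<noteq> [] \<and> hd ys = x \<and> set ys \<subseteq> A
        \<and> successively R (ys @ [y]) \<and> Q (Max (col ` set ys))"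
  have "\<exists>x. \<forall>n. (P (x n) \<and> (n = 0 \<longrightarrow> x n = x0)) \<and> (\<exists>ys. ?seg (x n) ys (x (Suc n)))"
  proof (rule dependent_nat_choice)
    show "\<exists>y. P y \<and> (0 = 0 \<longrightarrow> y = x0)" using assms(2) by blast
    fix y and n :: nat assume "P y \<and> (n = 0 \<longrightarrow> y = x0)"
    then show "\<exists>z. (P z \<and> (Suc n = 0 \<longrightarrow> z = x0)) \<and> (\<exists>ys. ?seg y ys z)" using step by blast
  qed
  then obtain x where x0: "x 0 = x0" and "\<forall>k. \<exists>ys. ?seg (x k) ys (x (Suc k))" by blast
  then obtain L where L: "\<And>k. ?seg (x k) (L k) (x (Suc k))" by metis
  obtain w where "w 0 = x 0" "\<And>n. R (w n) (w (Suc n))" "range w \<subseteq> A" "Q (Max (limit (col \<circ> w)))"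
    using lasso_of_segment_sequence[where L = L and x = x and Q = Q and col = col, OF assms(1) L] by blast
  then show ?thesis using x0 by (intro that) auto
qed

section \<open>Plays and their profiles\<close>

abbreviation (input) edge_rel :: "('a \<times> 'a) set \<Rightarrow> 'a \<Rightarrow> 'a \<Rightarrow> bool" where
  "edge_rel F \<equiv> \<lambda>x y. (x, y) \<in> F"

lemma fin_play_iff:
  "fin_play F s xs \<longleftrightarrow>
     xs \<noteq> [] \<and> hd xs = s \<and> successively (edge_rel F) xs \<and> (\<forall>t. (last xs, t) \<notin> F)"
  unfolding fin_play_def successively_conv_nth by blast

lemma fin_play_append:
  assumes "ys \<noteq> []" "successively (edge_rel F) (ys @ [hd zs])" "fin_play F (hd zs) zs"
  shows "fin_play F (hd ys) (ys @ zs)"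
  using assms unfolding fin_play_iff by (auto simp: successively_append_iff)

lemma inf_play_conc:
  assumes "ys \<noteq> []" "successively (edge_rel F) (ys @ [g 0])" "inf_play F (g 0) g"
  shows "inf_play F (hd ys) (ys \<frown> g)"
  unfolding inf_play_def
proof (intro conjI allI)
  show "(ys \<frown> g) 0 = hd ys" using assms(1) by (simp add: hd_conv_nth)
  fix n
  show "((ys \<frown> g) n, (ys \<frown> g) (Suc n)) \<in> F"
  proof (cases "Suc n < length ys")
    case True
    then show ?thesis using successively_nth[OF assms(2), of n] by (simp add: nth_append)
  next
    case False
    show ?thesis
    proof (cases "n < length ys")
      case True
      then have "n = length ys - 1" using False by simp
      then show ?thesis using successively_nth[OF assms(2), of n] assms(1) False
        by (simp add: nth_append)
    next
      case False
      then show ?thesis using assms(3) unfolding inf_play_def by (simp add: Suc_diff_le)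
    qed
  qed
qed

lemma fin_play_mono: "F \<subseteq> F' \<Longrightarrow> fin_play F x xs \<Longrightarrow> (\<forall>t. (last xs, t) \<notin> F') \<Longrightarrow> fin_play F' x xs"
  unfolding fin_play_iff by (auto elim: successively_mono)

lemma inf_play_mono: "F \<subseteq> F' \<Longrightarrow> inf_play F x f \<Longrightarrow> inf_play F' x f"
  unfolding inf_play_def by blast

lemma parity_win0_limit: "parity_win0 c g \<longleftrightarrow> even (Max (limit (c \<circ> g)))"
  unfolding parity_win0_def limit_def by simp

lemma inf_prof_limit:
  "inf_prof c f = (if even (Max (limit ((\<lambda>x. c (the x)) \<circ> f))) then PosInf else NegInf)"
  unfolding inf_prof_def parity_win0_limit by (simp add: comp_def)

lemma inf_prof_conc: "inf_prof c (ys \<frown> f) = inf_prof c f"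
  unfolding inf_prof_limit by (simp add: comp_concat)

lemma play_profiles_None:
  assumes "\<And>t. (None, t) \<notin> F"
  shows "play_profiles c F None = {Fin (\<lambda>_. 0)}"
proof -
  have "fin_play F None xs \<longleftrightarrow> xs = [None]" for xs
    using assms unfolding fin_play_iff by (cases xs) (auto simp: successively_Cons)
  moreover have "\<not> inf_play F None f" for f
    using assms unfolding inf_play_def by metis
  ultimately show ?thesis unfolding play_profiles_def fin_prof_def by auto
qed

lemma play_profiles_finI: "fin_play F x xs \<Longrightarrow> fin_prof c xs \<in> play_profiles c F x"
  unfolding play_profiles_def by blast

lemma play_profiles_infI: "inf_play F x f \<Longrightarrow> inf_prof c f \<in> play_profiles c F x"
  unfolding play_profiles_def by blast

lemma play_profilesE:
  assumes "p \<in> play_profiles c F x"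
  obtains xs where "fin_play F x xs" "p = fin_prof c xs"
    | f where "inf_play F x f" "p = inf_prof c f"
  using assms unfolding play_profiles_def by blast

lemma fin_prof_Cons: "fin_prof c (Some v # ys) = prof_add (Fin (unitv (c v))) (fin_prof c ys)"
  unfolding fin_prof_def by simp

lemma inf_prof_Cons: "inf_prof c ([Some v] \<frown> g) = prof_add (Fin (unitv (c v))) (inf_prof c g)"
  unfolding inf_prof_conc by (simp add: inf_prof_def)

lemma play_profiles_Some_subset:
  assumes "\<exists>t. (Some v, t) \<in> F"
  shows "play_profiles c F (Some v) \<subseteq>
     (\<Union>t\<in>{t. (Some v, t) \<in> F}. prof_add (Fin (unitv (c v))) ` play_profiles c F t)"
proof
  fix p assume "p \<in> play_profiles c F (Some v)"
  then show "p \<in> (\<Union>t\<in>{t. (Some v, t) \<in> F}. prof_add (Fin (unitv (c v))) ` play_profiles c F t)"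
  proof (cases rule: play_profilesE)
    case (1 xs)
    then obtain ys where xs: "xs = Some v # ys"
      unfolding fin_play_iff by (cases xs) auto
    have "ys \<noteq> []" using 1(1) assms unfolding xs fin_play_iff by auto
    then have "(Some v, hd ys) \<in> F" "fin_play F (hd ys) ys"
      using 1(1) unfolding xs fin_play_iff by (auto simp: successively_Cons)
    moreover have "p = prof_add (Fin (unitv (c v))) (fin_prof c ys)"
      using 1(2) xs fin_prof_Cons by simp
    ultimately show ?thesis using play_profiles_finI by blast
  next
    case (2 f)
    then have "(Some v, f 1) \<in> F" "inf_play F (f 1) (suffix 1 f)"
      unfolding inf_play_def by (metis One_nat_def, simp)
    moreover have "f = [Some v] \<frown> suffix 1 f"
      using build_first[of f] 2(1) unfolding inf_play_def by simp
    then have "p = prof_add (Fin (unitv (c v))) (inf_prof c (suffix 1 f))"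
      using 2(2) inf_prof_Cons by metis
    ultimately show ?thesis using play_profiles_infI by blast
  qed
qed

lemma play_profiles_Some_supset:
  "(\<Union>t\<in>{t. (Some v, t) \<in> F}. prof_add (Fin (unitv (c v))) ` play_profiles c F t)
    \<subseteq> play_profiles c F (Some v)"
proof
  fix p assume "p \<in> (\<Union>t\<in>{t. (Some v, t) \<in> F}. prof_add (Fin (unitv (c v))) ` play_profiles c F t)"
  then obtain t q where t: "(Some v, t) \<in> F" "q \<in> play_profiles c F t"
    and p: "p = prof_add (Fin (unitv (c v))) q" by blast
  from t(2) show "p \<in> play_profiles c F (Some v)"
  proof (cases rule: play_profilesE)
    case (1 xs)
    then have "fin_play F (Some v) ([Some v] @ xs)"
      using fin_play_append[of "[Some v]" F xs] t(1) unfolding fin_play_iff by auto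
    then show ?thesis using 1(2) p fin_prof_Cons play_profiles_finI by (metis append_Cons append_Nil)
  next
    case (2 g)
    then have "inf_play F (Some v) ([Some v] \<frown> g)"
      using inf_play_conc[of "[Some v]" F g] t(1) unfolding inf_play_def by auto
    then show ?thesis using 2(2) p inf_prof_Cons play_profiles_infI by metis
  qed
qed

lemma play_profiles_step:
  "\<exists>t. (Some v, t) \<in> F \<Longrightarrow> play_profiles c F (Some v) =
     (\<Union>t\<in>{t. (Some v, t) \<in> F}. prof_add (Fin (unitv (c v))) ` play_profiles c F t)"
  using play_profiles_Some_subset play_profiles_Some_supset by (rule subset_antisym)

lemma play_exists: "(\<exists>xs. fin_play F x xs) \<or> (\<exists>f. inf_play F x f)"
proof (cases "\<exists>xs. fin_play F x xs")
  case no_fin: False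
  define reach where "reach y \<longleftrightarrow> (\<exists>xs. xs \<noteq> [] \<and> hd xs = x \<and> successively (edge_rel F) (xs @ [y]))" for y
  have successor: "\<exists>t. (y, t) \<in> F \<and> reach t" if "y = x \<or> reach y" for y
  proof -
    obtain xs where xs: "xs \<noteq> []" "hd xs = x" "successively (edge_rel F) xs" "last xs = y"
    proof (cases "y = x")
      case True then show ?thesis using that[of "[x]"] by simp
    next
      case False
      then obtain zs where "zs \<noteq> []" "hd zs = x" "successively (edge_rel F) (zs @ [y])"
        using \<open>y = x \<or> reach y\<close> unfolding reach_def by blast
      then show ?thesis using that[of "zs @ [y]"] by simp
    qed
    then obtain t where "(y, t) \<in> F" using no_fin unfolding fin_play_iff by blast
    then have "reach t" using xs unfolding reach_def
      by (intro exI[of _ xs]) (auto simp: successively_append_iff)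
    then show ?thesis using \<open>(y, t) \<in> F\<close> by blast
  qed
  have "\<exists>f. \<forall>n. ((f n = x \<or> reach (f n)) \<and> (n = 0 \<longrightarrow> f n = x)) \<and> (f n, f (Suc n)) \<in> F"
  proof (rule dependent_nat_choice)
    fix y and n :: nat assume "(y = x \<or> reach y) \<and> (n = 0 \<longrightarrow> y = x)"
    then show "\<exists>z. ((z = x \<or> reach z) \<and> (Suc n = 0 \<longrightarrow> z = x)) \<and> (y, z) \<in> F"
      using successor by blast
  qed blast
  then show ?thesis unfolding inf_play_def by blast
qed simp

definition prof_pos :: "nat \<Rightarrow> prof \<Rightarrow> bool" where
  "prof_pos d p \<longleftrightarrow> prof_less d (Fin (\<lambda>_. 0)) p"

definition prof_neg :: "nat \<Rightarrow> prof \<Rightarrow> bool" where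
  "prof_neg d p \<longleftrightarrow> prof_less d p (Fin (\<lambda>_. 0))"

lemma prof_pos_PosInf: "prof_pos d PosInf"
  unfolding prof_pos_def by simp

lemma prof_neg_NegInf: "prof_neg d NegInf"
  unfolding prof_neg_def by simp

lemma prof_pos_mono: "prof_pos d p \<Longrightarrow> prof_le d p q \<Longrightarrow> prof_pos d q"
  unfolding prof_pos_def using prof_less_le_trans by blast

lemma prof_pos_add: "prof_pos d p \<Longrightarrow> prof_less d (Fin u) (prof_add (Fin u) p)"
  unfolding prof_pos_def using prof_add_less_cancel[of d u "Fin (\<lambda>_. 0)" p] by simp

lemma prof_neg_add: "prof_neg d p \<Longrightarrow> prof_less d (prof_add (Fin u) p) (Fin u)"
  unfolding prof_neg_def using prof_add_less_cancel[of d u p "Fin (\<lambda>_. 0)"] by simp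

definition colour_count :: "('v \<Rightarrow> nat) \<Rightarrow> 'v option list \<Rightarrow> nat \<Rightarrow> int" where
  "colour_count c xs j = (\<Sum>x \<leftarrow> xs. case x of None \<Rightarrow> 0 | Some v \<Rightarrow> unitv (c v) j)"

definition path_colours :: "('v \<Rightarrow> nat) \<Rightarrow> 'v option list \<Rightarrow> nat set" where
  "path_colours c xs = c ` {v. Some v \<in> set xs}"

lemma fin_prof_colour_count: "fin_prof c xs = Fin (colour_count c xs)"
  unfolding fin_prof_def colour_count_def by simp

lemma colour_count_append: "colour_count c (xs @ ys) j = colour_count c xs j + colour_count c ys j"
  unfolding colour_count_def by simp

lemma colour_count_pos_iff:
  "colour_count c xs j \<ge> 0 \<and> (colour_count c xs j > 0 \<longleftrightarrow> j \<in> path_colours c xs)"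
proof (induction xs)
  case (Cons x xs)
  have "colour_count c (x # xs) j = (case x of None \<Rightarrow> 0 | Some v \<Rightarrow> unitv (c v) j) + colour_count c xs j"
    unfolding colour_count_def by simp
  moreover have "path_colours c (x # xs) = (case x of None \<Rightarrow> {} | Some v \<Rightarrow> {c v}) \<union> path_colours c xs"
    unfolding path_colours_def by (cases x) auto
  ultimately show ?case using Cons by (cases x) (auto simp: unitv_def)
qed (simp add: colour_count_def path_colours_def)

lemma path_colours_append: "path_colours c (xs @ ys) = path_colours c xs \<union> path_colours c ys"
  unfolding path_colours_def by auto

lemma path_colours_the: "set ys \<subseteq> Some ` U \<Longrightarrow> path_colours c ys = (\<lambda>x. c (the x)) ` set ys"
  unfolding path_colours_def by force

lemma fin_prof_sign:
  assumes fin: "finite (path_colours c xs)" and ne: "path_colours c xs \<noteq> {}"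
    and bd: "\<forall>k\<in>path_colours c xs. k < d"
  shows "prof_pos d (fin_prof c xs) \<longleftrightarrow> even (Max (path_colours c xs))"
    and "prof_neg d (fin_prof c xs) \<longleftrightarrow> odd (Max (path_colours c xs))"
proof -
  define m where "m = Max (path_colours c xs)"
  have "m \<in> path_colours c xs" using fin ne m_def by simp
  then have m: "m < d" "colour_count c xs m > 0" using bd colour_count_pos_iff by blast+
  have le_m: "k \<le> m" if "colour_count c xs k \<noteq> 0" for k
  proof -
    have "k \<in> path_colours c xs" using that colour_count_pos_iff[of c xs k] by linarith
    then show ?thesis using fin m_def by simp
  qed
  have above: "\<forall>j. m < j \<and> j < d \<longrightarrow> colour_count c xs j = 0"
    using le_m by (meson not_le)
  have top: "k = m" if "k < d" "colour_count c xs k \<noteq> 0" "\<forall>j. k < j \<and> j < d \<longrightarrow> colour_count c xs j = 0" for k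
    using le_m[OF that(2)] that(3) m by (metis less_irrefl nat_less_le)
  show pos: "prof_pos d (fin_prof c xs) \<longleftrightarrow> even m"
  proof
    assume "prof_pos d (fin_prof c xs)"
    then obtain k where "k < d" "0 \<noteq> colour_count c xs k" "\<forall>j. k < j \<and> j < d \<longrightarrow> 0 = colour_count c xs j"
       "(even k \<and> 0 < colour_count c xs k) \<or> (odd k \<and> 0 > colour_count c xs k)"
      unfolding prof_pos_def fin_prof_colour_count by auto
    then show "even m" using top[of k] colour_count_pos_iff[of c xs k] by auto
  next
    assume "even m"
    then show "prof_pos d (fin_prof c xs)" unfolding prof_pos_def fin_prof_colour_count
      using m above by (auto intro!: exI[of _ m])
  qed
  have "\<not> prof_eq d (fin_prof c xs) (Fin (\<lambda>_. 0))" using m unfolding fin_prof_colour_count by auto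
  then have "prof_neg d (fin_prof c xs) \<longleftrightarrow> \<not> prof_pos d (fin_prof c xs)"
    unfolding prof_pos_def prof_neg_def using prof_less_linear prof_less_asym prof_eq_sym by blast
  then show "prof_neg d (fin_prof c xs) \<longleftrightarrow> odd m" using pos by simp
qed

lemma lasso_play_won:
  assumes "successively (edge_rel F) (pre @ cyc @ [hd cyc])" "cyc \<noteq> []" "set cyc \<subseteq> Some ` U"
    "hd (pre @ cyc) = Some v" "even (Max (path_colours c cyc))"
  shows "inf_play F (Some v) (pre \<frown> cyc\<^sup>\<omega>) \<and> inf_prof c (pre \<frown> cyc\<^sup>\<omega>) = PosInf"
proof
  show "inf_play F (Some v) (pre \<frown> cyc\<^sup>\<omega>)"
    unfolding inf_play_def using lasso_start[OF assms(2)] lasso_step[OF assms(2,1)] assms(4) by simp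
  have "limit ((\<lambda>x. c (the x)) \<circ> (pre \<frown> cyc\<^sup>\<omega>)) = path_colours c cyc"
    unfolding lasso_limit[OF assms(2)] using path_colours_the[OF assms(3)] by simp
  then show "inf_prof c (pre \<frown> cyc\<^sup>\<omega>) = PosInf" using assms(5) unfolding inf_prof_limit by simp
qed

lemma fin_play_cut_cycle:
  assumes "fin_play F x (pre @ [y] @ mid @ [y] @ post)"
  shows "fin_play F x (pre @ [y] @ post)"
proof -
  have play: "hd (pre @ [y] @ mid @ [y] @ post) = x" "\<forall>t. (last (pre @ [y] @ mid @ [y] @ post), t) \<notin> F"
    "successively (edge_rel F) ((pre @ [y]) @ (mid @ [y] @ post))"
    "successively (edge_rel F) ((pre @ [y] @ mid) @ ([y] @ post))"
    using assms unfolding fin_play_iff by simp_all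
  then have "successively (edge_rel F) (pre @ [y])" "successively (edge_rel F) ([y] @ post)"
    by (simp_all only: successively_append_iff)
  then have "successively (edge_rel F) (pre @ [y] @ post)"
    using successively_append_iff[of _ "pre @ [y]" post] successively_Cons[of _ y post] by (cases post) auto
  moreover have "hd (pre @ [y] @ post) = x" using play(1) by (cases pre) simp_all
  moreover have "last (pre @ [y] @ post) = last (pre @ [y] @ mid @ [y] @ post)"
    by (cases post rule: rev_exhaust) simp_all
  ultimately show ?thesis using play(2) unfolding fin_play_iff by simp
qed

lemma fin_prof_cut_cycle:
  "fin_prof c (pre @ [y] @ mid @ [y] @ post) =
    prof_add (Fin (colour_count c (pre @ [y] @ post))) (fin_prof c (y # mid))"
proof -
  have "colour_count c (pre @ (y # mid) @ ([y] @ post)) j =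
      colour_count c (pre @ ([y] @ post)) j + colour_count c (y # mid) j" for j
    by (simp only: colour_count_append)
  then show ?thesis unfolding fin_prof_colour_count by (simp add: fun_eq_iff)
qed

section \<open>Play graphs with an escape vertex\<close>

locale play_graph =
  fixes V :: "'v set" and c :: "'v \<Rightarrow> nat" and d :: nat and F :: "('v option \<times> 'v option) set"
  assumes finite_V: "finite V"
    and colour_bound: "\<forall>v\<in>V. c v < d"
    and edges: "F \<subseteq> Some ` V \<times> insert None (Some ` V)"
    and total: "\<forall>v\<in>V. \<exists>y. (Some v, y) \<in> F"
begin

lemma no_edge_from_None: "(None, y) \<notin> F"
  using edges by blast

lemma path_colours_finite_bounded:
  assumes "ys \<noteq> []" "set ys \<subseteq> Some ` V"
  shows "finite (path_colours c ys)" "path_colours c ys \<noteq> {}" "\<forall>k\<in>path_colours c ys. k < d"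
proof -
  have sub: "{v. Some v \<in> set ys} \<subseteq> V" using assms(2) by auto
  then show "finite (path_colours c ys)" unfolding path_colours_def
    using finite_V finite_subset by blast
  show "\<forall>k\<in>path_colours c ys. k < d" unfolding path_colours_def using sub colour_bound by auto
  obtain v where "Some v \<in> set ys" using assms by (metis hd_in_set imageE subsetD)
  then show "path_colours c ys \<noteq> {}" unfolding path_colours_def by blast
qed

lemma fin_play_split:
  assumes v: "v \<in> V" and play: "fin_play F (Some v) xs"
  obtains ys s where "xs = ys @ [None]" "ys \<noteq> []" "hd ys = Some v" "set ys \<subseteq> Some ` V"
    "successively (edge_rel F) ys" "last ys = Some s" "(Some s, None) \<in> F"
proof -
  have xs: "xs \<noteq> []" "hd xs = Some v" "successively (edge_rel F) xs" "\<forall>t. (last xs, t) \<notin> F"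
    using play unfolding fin_play_iff by blast+
  have in_V: "set (butlast xs) \<subseteq> Some ` V"
  proof
    fix x assume "x \<in> set (butlast xs)"
    then obtain i where "i < length (butlast xs)" "x = butlast xs ! i" by (metis in_set_conv_nth)
    then have i: "Suc i < length xs" "x = xs ! i" by (auto simp: nth_butlast)
    then show "x \<in> Some ` V" using successively_nth[OF xs(3) i(1)] edges by auto
  qed
  have "last xs = None"
  proof (cases xs rule: rev_exhaust)
    case (snoc zs x)
    show ?thesis
    proof (cases zs)
      case Nil then show ?thesis using snoc xs v total by auto
    next
      case (Cons z zs')
      then have "(last zs, x) \<in> F" using snoc xs(3) successively_append_iff[of _ zs "[x]"] by simp
      then show ?thesis using snoc xs(4) edges total by fastforce
    qed
  qed (use xs in simp)
  then have split: "xs = butlast xs @ [None]" using xs(1) by (metis append_butlast_last_id)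
  then have ne: "butlast xs \<noteq> []" using xs(2) by (metis append_Nil list.sel(1) option.distinct(1))
  then obtain s where s: "last (butlast xs) = Some s" using in_V by (metis imageE last_in_set subsetD)
  have "successively (edge_rel F) (butlast xs)" "(last (butlast xs), None) \<in> F"
    using xs(3) ne by (subst (asm) split, simp add: successively_append_iff)+
  then show ?thesis using that split ne in_V s xs(2)
    by (metis hd_append2)
qed

lemma inf_play_range:
  assumes "v \<in> V" "inf_play F (Some v) f"
  shows "f n \<in> Some ` V"
proof (induction n)
  case (Suc n)
  have "(f (Suc n), f (Suc (Suc n))) \<in> F" using assms(2) unfolding inf_play_def by blast
  then show ?case using edges by blast
qed (use assms in \<open>simp add: inf_play_def\<close>)

lemma fin_play_sign:
  assumes "v \<in> V" "fin_play F (Some v) xs"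
  shows "prof_pos d (fin_prof c xs) \<longleftrightarrow> even (Max (path_colours c xs))"
    and "prof_neg d (fin_prof c xs) \<longleftrightarrow> odd (Max (path_colours c xs))"
proof -
  obtain ys where "xs = ys @ [None]" "ys \<noteq> []" "set ys \<subseteq> Some ` V"
    using fin_play_split[OF assms] by metis
  moreover have "path_colours c [None] = {}" unfolding path_colours_def by simp
  ultimately have "path_colours c xs = path_colours c ys" by (simp add: path_colours_append)
  then have "finite (path_colours c xs)" "path_colours c xs \<noteq> {}" "\<forall>k\<in>path_colours c xs. k < d"
    using path_colours_finite_bounded[OF \<open>ys \<noteq> []\<close> \<open>set ys \<subseteq> Some ` V\<close>] by simp_all
  then show "prof_pos d (fin_prof c xs) \<longleftrightarrow> even (Max (path_colours c xs))"
    "prof_neg d (fin_prof c xs) \<longleftrightarrow> odd (Max (path_colours c xs))"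
    by (rule fin_prof_sign)+
qed

lemma play_profile_sign:
  assumes "v \<in> V" "p \<in> play_profiles c F (Some v)"
  shows "prof_pos d p \<or> prof_neg d p"
  using assms(2)
proof (cases rule: play_profilesE)
  case (1 xs) then show ?thesis using fin_play_sign[OF assms(1)] by auto
next
  case (2 f) then show ?thesis unfolding inf_prof_def using prof_pos_PosInf prof_neg_NegInf by auto
qed

lemma positive_prefix:
  assumes ys: "ys \<noteq> []" "set ys \<subseteq> Some ` V" "successively (edge_rel F) (ys @ [Some u])"
    and even: "even (Max (path_colours c ys))" and u: "u \<in> V"
    and q: "q \<in> play_profiles c F (Some u)" "prof_pos d q"
  shows "\<exists>p\<in>play_profiles c F (hd ys). prof_pos d p"
proof -
  obtain w where w: "hd ys = Some w" "w \<in> V" using ys(1,2) by (metis hd_in_set imageE subsetD)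
  from q(1) show ?thesis
  proof (cases rule: play_profilesE)
    case (1 zs)
    then have zs: "fin_play F (Some w) (ys @ zs)"
      using fin_play_append[of ys F zs] ys(1,3) w(1) unfolding fin_play_iff by auto
    obtain zs' where "zs = zs' @ [None]" "zs' \<noteq> []" "set zs' \<subseteq> Some ` V"
      using fin_play_split[OF u 1(1)] by metis
    then have "finite (path_colours c zs)" "path_colours c zs \<noteq> {}"
      using path_colours_finite_bounded[of zs'] by (auto simp: path_colours_append path_colours_def)
    moreover have "even (Max (path_colours c zs))" using q(2) 1(2) fin_play_sign(1)[OF u 1(1)] by simp
    moreover have "finite (path_colours c ys)" "path_colours c ys \<noteq> {}"
      using path_colours_finite_bounded[OF ys(1,2)] by auto
    ultimately have "even (Max (path_colours c (ys @ zs)))"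
      using even by (simp add: path_colours_append Max_Un max_def)
    then show ?thesis using fin_play_sign(1)[OF w(2) zs] play_profiles_finI[OF zs] w(1) by auto
  next
    case (2 h)
    then have "inf_play F (Some w) (ys \<frown> h)"
      using inf_play_conc[of ys F h] ys(1,3) w(1) unfolding inf_play_def by auto
    moreover have "prof_pos d (inf_prof c (ys \<frown> h))" using q(2) 2(2) by (simp add: inf_prof_conc)
    ultimately show ?thesis using play_profiles_infI w(1) by fastforce
  qed
qed

text \<open>A repeated vertex on a finite play closes a cycle: if its dominating colour is even, the
  cycle can be repeated forever to win; if it is odd, cutting it out increases the profile.\<close>
lemma fin_play_simple_dominates:
  assumes v: "v \<in> V" and no_win: "\<nexists>f. inf_play F (Some v) f \<and> inf_prof c f = PosInf"
  shows "fin_play F (Some v) xs \<Longrightarrow>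
    \<exists>ys. fin_play F (Some v) ys \<and> distinct ys \<and> prof_le d (fin_prof c xs) (fin_prof c ys)"
proof (induction "length xs" arbitrary: xs rule: less_induct)
  case less
  show ?case
  proof (cases "distinct xs")
    case True then show ?thesis using less.prems prof_le_refl by blast
  next
    case False
    then obtain pre y mid post where xs: "xs = pre @ [y] @ mid @ [y] @ post"
      using not_distinct_decomp by blast
    define cyc where "cyc = y # mid"
    obtain ys where ys: "xs = ys @ [None]" "set ys \<subseteq> Some ` V"
      using fin_play_split[OF v less.prems] by metis
    have "ys = butlast xs" using ys(1) by simp
    also have "\<dots> = pre @ cyc @ butlast (y # post)" unfolding xs cyc_def by (simp add: butlast_append)
    finally have cyc_V: "set cyc \<subseteq> Some ` V" using ys(2) by auto
    have cyc_ne: "cyc \<noteq> []" unfolding cyc_def by simp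
    note cyc_colours = path_colours_finite_bounded[OF cyc_ne cyc_V]
    show ?thesis
    proof (cases "even (Max (path_colours c cyc))")
      case True
      have "successively (edge_rel F) ((pre @ cyc @ [hd cyc]) @ post)"
        using less.prems unfolding xs cyc_def fin_play_iff by simp
      then have path: "successively (edge_rel F) (pre @ cyc @ [hd cyc])"
        by (simp only: successively_append_iff)
      have "hd (pre @ cyc) = Some v"
        using less.prems unfolding xs cyc_def fin_play_iff by (cases pre) simp_all
      then show ?thesis using lasso_play_won[OF path cyc_ne cyc_V _ True] no_win by blast
    next
      case False
      define zs where "zs = pre @ [y] @ post"
      have zs_play: "fin_play F (Some v) zs"
        using fin_play_cut_cycle less.prems unfolding xs zs_def by blast
      have "length zs < length xs" unfolding zs_def xs by simp
      then obtain ws where ws: "fin_play F (Some v) ws" "distinct ws"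
        "prof_le d (fin_prof c zs) (fin_prof c ws)"
        using less.hyps zs_play by blast
      have "prof_neg d (fin_prof c cyc)" using fin_prof_sign(2)[OF cyc_colours] False by simp
      then have "prof_less d (fin_prof c xs) (fin_prof c zs)"
        using prof_neg_add[of d "fin_prof c cyc" "colour_count c zs"] fin_prof_cut_cycle[of c pre y mid post]
        unfolding xs zs_def cyc_def by (simp add: fin_prof_colour_count)
      then show ?thesis using ws prof_less_le_trans unfolding prof_le_def by blast
    qed
  qed
qed

lemma finite_simple_fin_plays:
  assumes v: "v \<in> V"
  shows "finite {ys. fin_play F (Some v) ys \<and> distinct ys}"
proof -
  let ?U = "insert None (Some ` V)"
  have "{ys. fin_play F (Some v) ys \<and> distinct ys} \<subseteq> {xs. set xs \<subseteq> ?U \<and> length xs \<le> card ?U}"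
  proof clarify
    fix ys assume ys: "fin_play F (Some v) ys" "distinct ys"
    obtain zs where "ys = zs @ [None]" "set zs \<subseteq> Some ` V"
      using fin_play_split[OF v ys(1)] by metis
    then have "set ys \<subseteq> ?U" by auto
    moreover have "length ys \<le> card ?U"
      using distinct_card[OF ys(2)] card_mono[OF _ \<open>set ys \<subseteq> ?U\<close>] finite_V by simp
    ultimately show "set ys \<subseteq> ?U \<and> length ys \<le> card ?U" by blast
  qed
  moreover have "finite {xs. set xs \<subseteq> ?U \<and> length xs \<le> card ?U}"
    using finite_lists_length_le[of ?U "card ?U"] finite_V by simp
  ultimately show ?thesis by (rule finite_subset)
qed

lemma play_profiles_max_no_win:
  assumes v: "v \<in> V" and no_win: "\<nexists>f. inf_play F (Some v) f \<and> inf_prof c f = PosInf"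
  shows "\<exists>m. is_prof_max d (play_profiles c F (Some v)) m"
proof -
  let ?P = "play_profiles c F (Some v)"
  have inf_lose: "inf_prof c f = NegInf" if "inf_play F (Some v) f" for f
    using no_win that unfolding inf_prof_def by auto
  define S where "S = {ys. fin_play F (Some v) ys \<and> distinct ys}"
  have "finite S" unfolding S_def using finite_simple_fin_plays[OF v] .
  show ?thesis
  proof (cases "S = {}")
    case False
    then obtain m where m: "is_prof_max d (fin_prof c ` S) m"
      using finite_prof_max[of "fin_prof c ` S" d] \<open>finite S\<close> by blast
    have "prof_le d q m" if "q \<in> ?P" for q
      using that
    proof (cases rule: play_profilesE)
      case (1 xs)
      then obtain ys where "ys \<in> S" "prof_le d q (fin_prof c ys)"
        using fin_play_simple_dominates[OF v no_win] unfolding S_def by blast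
      then show ?thesis using m prof_le_trans unfolding is_prof_max_def by blast
    next
      case (2 f)
      then have "q = NegInf" using inf_lose by simp
      moreover obtain ys where "m = fin_prof c ys" using m unfolding is_prof_max_def by blast
      ultimately show ?thesis unfolding prof_le_def fin_prof_def by simp
    qed
    moreover have "m \<in> ?P" using m play_profiles_finI unfolding is_prof_max_def S_def by blast
    ultimately show ?thesis unfolding is_prof_max_def by blast
  next
    case True
    then have no_fin: "\<nexists>xs. fin_play F (Some v) xs"
      using fin_play_simple_dominates[OF v no_win] unfolding S_def by blast
    then obtain f where "inf_play F (Some v) f" using play_exists by blast
    then have "NegInf \<in> ?P" using inf_lose play_profiles_infI by metis
    moreover have "q = NegInf" if "q \<in> ?P" for q
      using that no_fin inf_lose by (cases rule: play_profilesE) auto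
    ultimately show ?thesis unfolding is_prof_max_def using prof_le_refl by blast
  qed
qed

lemma play_profiles_max:
  assumes v: "v \<in> V"
  shows "is_prof_max d (play_profiles c F (Some v)) (pmax d (play_profiles c F (Some v)))"
proof (cases "\<exists>f. inf_play F (Some v) f \<and> inf_prof c f = PosInf")
  case True
  then have "PosInf \<in> play_profiles c F (Some v)" using play_profiles_infI by metis
  moreover have "prof_le d q PosInf" for q unfolding prof_le_def by (cases q) auto
  ultimately show ?thesis unfolding is_prof_max_def by (metis is_prof_max_def is_prof_max_pmax)
next
  case False
  then show ?thesis using play_profiles_max_no_win[OF v] is_prof_max_pmax by blast
qed

end

section \<open>Binary escape arenas\<close>

locale binary_escape_arena =
  fixes V :: "'v set" and E :: "('v \<times> 'v) set" and own c :: "'v \<Rightarrow> nat" and d :: nat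
  assumes arena: "arena V E own c d"
    and binary: "\<forall>s \<in> Vown V own 0. card (Ebot V E own `` {Some s}) \<le> 2"
begin

abbreviation "V0 \<equiv> Vown V own 0"
abbreviation "V1 \<equiv> Vown V own 1"
abbreviation "strategy0 \<equiv> is_strategy V E own 0"
abbreviation "strategy1 \<equiv> is_strategy V E own 1"
abbreviation "profiles \<sigma> \<tau> \<equiv> play_profiles c (\<sigma> \<union> \<tau>)"
abbreviation "val \<equiv> valuation V E own c d"

lemma finite_V: "finite V"
  using arena unfolding arena_def by blast

lemma E_sub: "E \<subseteq> V \<times> V"
  using arena unfolding arena_def by blast

lemma successor_exists: "v \<in> V \<Longrightarrow> \<exists>w. (v, w) \<in> E"
  using arena unfolding arena_def by blast

lemma V0_or_V1: "v \<in> V \<Longrightarrow> v \<in> V0 \<or> v \<in> V1"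
  using arena unfolding arena_def Vown_def by auto

lemma colour_bound: "v \<in> V \<Longrightarrow> c v < d"
  using arena unfolding arena_def by (metis atLeastLessThan_iff image_eqI)

lemma V0_not_V1: "v \<in> V0 \<Longrightarrow> v \<notin> V1"
  unfolding Vown_def by simp

definition succ0 :: "'v \<Rightarrow> 'v" where
  "succ0 s = (SOME w. (s, w) \<in> E)"

lemma succ0_edge: "s \<in> V0 \<Longrightarrow> (s, succ0 s) \<in> E"
  unfolding succ0_def using successor_exists[of s] someI_ex[of "\<lambda>w. (s, w) \<in> E"] by (simp add: Vown_def)

lemma succ0_V: "s \<in> V0 \<Longrightarrow> succ0 s \<in> V"
  using succ0_edge E_sub by blast

text \<open>The bound on the escape successors, one of which is \<bottom>, leaves each vertex of
  player 0 a single successor in the original arena.\<close>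
lemma succ0_unique:
  assumes s: "s \<in> V0" and w: "(s, w) \<in> E"
  shows "w = succ0 s"
proof (rule ccontr)
  assume "w \<noteq> succ0 s"
  then have "card {None, Some w, Some (succ0 s)} = 3" by simp
  moreover have "{None, Some w, Some (succ0 s)} \<subseteq> Ebot V E own `` {Some s}"
    using s w succ0_edge unfolding Ebot_def lift_edges_def by auto
  moreover have "Ebot V E own `` {Some s} \<subseteq> insert None (Some ` V)"
    using E_sub unfolding Ebot_def lift_edges_def by auto
  then have "finite (Ebot V E own `` {Some s})"
    using finite_V by (meson finite_imageI finite_insert finite_subset)
  ultimately have "3 \<le> card (Ebot V E own `` {Some s})" by (metis card_mono)
  then show False using binary s by fastforce
qed

lemma E0_iff: "(x, t) \<in> E0 V E own \<longleftrightarrow> (\<exists>s\<in>V0. x = Some s \<and> (t = None \<or> t = Some (succ0 s)))"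
  unfolding E0_def Ebot_def lift_edges_def using succ0_unique succ0_edge by auto

lemma E1_iff: "(x, t) \<in> E1 V E own \<longleftrightarrow> (\<exists>v w. x = Some v \<and> t = Some w \<and> v \<in> V1 \<and> (v, w) \<in> E)"
  unfolding E1_def lift_edges_def by auto

lemma strategy1_E1: "strategy1 (E1 V E own)"
  unfolding is_strategy_def
proof (intro conjI ballI)
  fix s assume "s \<in> V1"
  then obtain w where "(s, w) \<in> E" using successor_exists unfolding Vown_def by blast
  then show "\<exists>t. (Some s, t) \<in> E1 V E own" using \<open>s \<in> V1\<close> E1_iff by blast
qed simp

lemma finite_strategies1: "finite {\<tau>. strategy1 \<tau>}"
proof -
  have "finite E" using E_sub finite_cartesian_product[OF finite_V finite_V] by (rule finite_subset)
  moreover have "E1 V E own \<subseteq> (\<lambda>(a, b). (Some a, Some b)) ` E"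
    unfolding E1_def lift_edges_def by auto
  ultimately have "finite (E1 V E own)" by (rule finite_subset[OF _ finite_imageI, rotated])
  moreover have "{\<tau>. strategy1 \<tau>} \<subseteq> Pow (E1 V E own)" unfolding is_strategy_def by auto
  ultimately show ?thesis by (simp add: finite_subset)
qed

lemma strategy0_edge:
  assumes "strategy0 \<sigma>" "(x, t) \<in> \<sigma>"
  shows "\<exists>s\<in>V0. x = Some s \<and> (t = None \<or> t = Some (succ0 s))"
  using assms E0_iff unfolding is_strategy_def by auto

lemma strategy1_edge:
  assumes "strategy1 \<tau>" "(x, t) \<in> \<tau>"
  shows "\<exists>v w. x = Some v \<and> t = Some w \<and> v \<in> V1 \<and> (v, w) \<in> E"
  using assms E1_iff unfolding is_strategy_def by auto

lemma play_graph_strategies: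
  assumes \<sigma>: "strategy0 \<sigma>" and \<tau>: "strategy1 \<tau>"
  shows "play_graph V c d (\<sigma> \<union> \<tau>)"
proof
  show "\<sigma> \<union> \<tau> \<subseteq> Some ` V \<times> insert None (Some ` V)"
  proof
    fix e assume "e \<in> \<sigma> \<union> \<tau>"
    then consider "\<exists>s\<in>V0. fst e = Some s \<and> (snd e = None \<or> snd e = Some (succ0 s))"
      | "\<exists>v w. fst e = Some v \<and> snd e = Some w \<and> v \<in> V1 \<and> (v, w) \<in> E"
      using strategy0_edge[OF \<sigma>] strategy1_edge[OF \<tau>] by (metis UnE prod.collapse)
    then show "e \<in> Some ` V \<times> insert None (Some ` V)"
      using succ0_V E_sub unfolding Vown_def by cases (auto simp: mem_Times_iff)
  qed
  show "\<forall>v\<in>V. \<exists>y. (Some v, y) \<in> \<sigma> \<union> \<tau>"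
    using \<sigma> \<tau> V0_or_V1 unfolding is_strategy_def by blast
qed (use finite_V colour_bound in auto)

section \<open>Valuations and improvements\<close>

definition positive_vertices :: "('v option \<times> 'v option) set \<Rightarrow> 'v set" where
  "positive_vertices \<sigma> = {v \<in> V. \<forall>\<tau>. strategy1 \<tau> \<longrightarrow> (\<exists>p\<in>profiles \<sigma> \<tau> (Some v). prof_pos d p)}"

lemma val_Some: "val \<sigma> (Some v) = pmin d ((\<lambda>\<tau>. pmax d (profiles \<sigma> \<tau> (Some v))) ` {\<tau>. strategy1 \<tau>})"
  unfolding valuation_def by (simp add: setcompr_eq_image)

lemma pmax_profiles:
  "strategy0 \<sigma> \<Longrightarrow> strategy1 \<tau> \<Longrightarrow> v \<in> V \<Longrightarrow>
    is_prof_max d (profiles \<sigma> \<tau> (Some v)) (pmax d (profiles \<sigma> \<tau> (Some v)))"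
  using play_graph.play_profiles_max[OF play_graph_strategies] by blast

lemma val_is_min:
  "is_prof_min d ((\<lambda>\<tau>. pmax d (profiles \<sigma> \<tau> (Some v))) ` {\<tau>. strategy1 \<tau>}) (val \<sigma> (Some v))"
proof -
  have "finite ((\<lambda>\<tau>. pmax d (profiles \<sigma> \<tau> (Some v))) ` {\<tau>. strategy1 \<tau>})"
    using finite_strategies1 by simp
  moreover have "(\<lambda>\<tau>. pmax d (profiles \<sigma> \<tau> (Some v))) ` {\<tau>. strategy1 \<tau>} \<noteq> {}"
    using strategy1_E1 by blast
  ultimately show ?thesis unfolding val_Some by (metis finite_prof_min is_prof_min_pmin)
qed

lemma val_sign:
  assumes \<sigma>: "strategy0 \<sigma>" and v: "v \<in> V"
  shows "prof_pos d (val \<sigma> (Some v)) \<or> prof_neg d (val \<sigma> (Some v))"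
    and "prof_pos d (val \<sigma> (Some v)) \<longleftrightarrow> v \<in> positive_vertices \<sigma>"
proof -
  from val_is_min[of \<sigma> v] obtain \<tau>0
    where \<tau>0: "strategy1 \<tau>0" "val \<sigma> (Some v) = pmax d (profiles \<sigma> \<tau>0 (Some v))"
    unfolding is_prof_min_def by blast
  note max0 = pmax_profiles[OF \<sigma> \<tau>0(1) v]
  then show "prof_pos d (val \<sigma> (Some v)) \<or> prof_neg d (val \<sigma> (Some v))"
    using play_graph.play_profile_sign[OF play_graph_strategies[OF \<sigma> \<tau>0(1)] v] \<tau>0(2)
    unfolding is_prof_max_def by simp
  show "prof_pos d (val \<sigma> (Some v)) \<longleftrightarrow> v \<in> positive_vertices \<sigma>"
  proof
    assume pos: "prof_pos d (val \<sigma> (Some v))"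
    have "\<exists>p\<in>profiles \<sigma> \<tau> (Some v). prof_pos d p" if \<tau>: "strategy1 \<tau>" for \<tau>
    proof -
      have "prof_le d (val \<sigma> (Some v)) (pmax d (profiles \<sigma> \<tau> (Some v)))"
        using val_is_min \<tau> unfolding is_prof_min_def by blast
      then show ?thesis using pos prof_pos_mono pmax_profiles[OF \<sigma> \<tau> v]
        unfolding is_prof_max_def by blast
    qed
    then show "v \<in> positive_vertices \<sigma>" unfolding positive_vertices_def using v by blast
  next
    assume "v \<in> positive_vertices \<sigma>"
    then obtain p where "p \<in> profiles \<sigma> \<tau>0 (Some v)" "prof_pos d p"
      unfolding positive_vertices_def using \<tau>0(1) by blast
    then show "prof_pos d (val \<sigma> (Some v))"
      using max0 \<tau>0(2) prof_pos_mono unfolding is_prof_max_def by metis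
  qed
qed

definition local_val :: "('v option \<times> 'v option) set \<Rightarrow> 'v \<Rightarrow> prof \<Rightarrow> prof" where
  "local_val \<sigma> s M = (if (Some s, Some (succ0 s)) \<in> \<sigma> \<and> ((Some s, None) \<notin> \<sigma> \<or> prof_pos d M)
     then prof_add (Fin (unitv (c s))) M else Fin (unitv (c s)))"

lemma local_val_mono:
  assumes "prof_le d p q"
  shows "prof_le d (local_val \<sigma> s p) (local_val \<sigma> s q)"
proof -
  have "prof_pos d q" if "prof_pos d p" using that assms prof_pos_mono by blast
  moreover have "prof_le d (Fin (unitv (c s))) (prof_add (Fin (unitv (c s))) q)" if "prof_pos d q"
    using prof_pos_add[OF that] unfolding prof_le_def by blast
  ultimately show ?thesis
    using assms prof_add_le_cancel prof_le_refl unfolding local_val_def by auto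
qed

lemma profiles_V0:
  assumes \<sigma>: "strategy0 \<sigma>" and \<tau>: "strategy1 \<tau>" and s: "s \<in> V0"
  shows "profiles \<sigma> \<tau> (Some s) =
    (if (Some s, None) \<in> \<sigma> then {Fin (unitv (c s))} else {}) \<union>
    (if (Some s, Some (succ0 s)) \<in> \<sigma> then prof_add (Fin (unitv (c s))) ` profiles \<sigma> \<tau> (Some (succ0 s)) else {})"
proof -
  interpret play_graph V c d "\<sigma> \<union> \<tau>" using play_graph_strategies[OF \<sigma> \<tau>] .
  have "(Some s, t) \<notin> \<tau>" for t using strategy1_edge[OF \<tau>] s V0_not_V1 by blast
  then have "(Some s, t) \<in> \<sigma> \<union> \<tau> \<longleftrightarrow>
      (t = None \<and> (Some s, None) \<in> \<sigma>) \<or> (t = Some (succ0 s) \<and> (Some s, Some (succ0 s)) \<in> \<sigma>)" for t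
    using strategy0_edge[OF \<sigma>, of "Some s" t] by auto
  then have succ: "{t. (Some s, t) \<in> \<sigma> \<union> \<tau>} =
      (if (Some s, None) \<in> \<sigma> then {None} else {}) \<union> (if (Some s, Some (succ0 s)) \<in> \<sigma> then {Some (succ0 s)} else {})"
    by auto
  have "\<exists>t. (Some s, t) \<in> \<sigma> \<union> \<tau>" using \<sigma> s unfolding is_strategy_def by blast
  then have "profiles \<sigma> \<tau> (Some s) =
      (\<Union>t\<in>{t. (Some s, t) \<in> \<sigma> \<union> \<tau>}. prof_add (Fin (unitv (c s))) ` profiles \<sigma> \<tau> t)"
    by (rule play_profiles_step)
  moreover have "profiles \<sigma> \<tau> None = {Fin (\<lambda>_. 0)}"
    using play_profiles_None no_edge_from_None by blast
  ultimately show ?thesis unfolding succ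
    by (cases "(Some s, None) \<in> \<sigma>"; cases "(Some s, Some (succ0 s)) \<in> \<sigma>") simp_all
qed

lemma pmax_profiles_V0:
  assumes \<sigma>: "strategy0 \<sigma>" and \<tau>: "strategy1 \<tau>" and s: "s \<in> V0"
  shows "prof_eq d (pmax d (profiles \<sigma> \<tau> (Some s))) (local_val \<sigma> s (pmax d (profiles \<sigma> \<tau> (Some (succ0 s)))))"
proof -
  let ?u = "Fin (unitv (c s))" and ?M = "pmax d (profiles \<sigma> \<tau> (Some (succ0 s)))"
  have max_M: "is_prof_max d (profiles \<sigma> \<tau> (Some (succ0 s))) ?M"
    using pmax_profiles[OF \<sigma> \<tau> succ0_V[OF s]] .
  have max_uM: "is_prof_max d (prof_add ?u ` profiles \<sigma> \<tau> (Some (succ0 s))) (prof_add ?u ?M)"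
    using is_prof_max_add[OF max_M] .
  have max_u: "is_prof_max d {?u} ?u" unfolding is_prof_max_def using prof_le_refl by simp
  have sign: "prof_pos d ?M \<or> prof_neg d ?M"
    using play_graph.play_profile_sign[OF play_graph_strategies[OF \<sigma> \<tau>] succ0_V[OF s]] max_M
    unfolding is_prof_max_def by blast
  let ?stop = "(Some s, None) \<in> \<sigma>" and ?cont = "(Some s, Some (succ0 s)) \<in> \<sigma>"
  have "?stop \<or> ?cont" using \<sigma> s strategy0_edge[OF \<sigma>] unfolding is_strategy_def by blast
  then consider "?stop" "?cont" | "?stop" "\<not> ?cont" | "\<not> ?stop" "?cont" by blast
  then have "is_prof_max d (profiles \<sigma> \<tau> (Some s)) (local_val \<sigma> s ?M)"
  proof cases
    case 1
    then have P: "profiles \<sigma> \<tau> (Some s) = {?u} \<union> prof_add ?u ` profiles \<sigma> \<tau> (Some (succ0 s))"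
      using profiles_V0[OF \<sigma> \<tau> s] by simp
    show ?thesis
    proof (cases "prof_pos d ?M")
      case True
      then have "prof_le d ?u (prof_add ?u ?M)" using prof_pos_add unfolding prof_le_def by blast
      then show ?thesis using is_prof_max_Un[OF max_u max_uM] 1 True
        unfolding P local_val_def by simp
    next
      case False
      then have "prof_le d (prof_add ?u ?M) ?u" using prof_neg_add[of d ?M] sign unfolding prof_le_def by blast
      then show ?thesis using is_prof_max_Un[OF max_uM max_u] 1 False
        unfolding P local_val_def by (simp add: Un_commute)
    qed
  next
    case 2
    then show ?thesis using max_u unfolding profiles_V0[OF \<sigma> \<tau> s] local_val_def by simp
  next
    case 3
    then show ?thesis using max_uM unfolding profiles_V0[OF \<sigma> \<tau> s] local_val_def by simp
  qed
  then show ?thesis using pmax_profiles is_prof_max_unique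
    by (meson is_prof_max_pmax)
qed

lemma val_V0:
  assumes \<sigma>: "strategy0 \<sigma>" and s: "s \<in> V0"
  shows "prof_eq d (val \<sigma> (Some s)) (local_val \<sigma> s (val \<sigma> (Some (succ0 s))))"
  unfolding val_Some using finite_strategies1 strategy1_E1 local_val_mono pmax_profiles_V0[OF \<sigma> _ s]
  by (intro pmin_image_mono) auto

lemma improvement_V0_iff:
  assumes \<sigma>: "strategy0 \<sigma>" and s: "s \<in> V0"
  defines "M \<equiv> val \<sigma> (Some (succ0 s))"
  shows "(Some s, None) \<in> improvements V E own c d \<sigma> \<longleftrightarrow> (Some s, Some (succ0 s)) \<notin> \<sigma> \<or> \<not> prof_pos d M"
    and "(Some s, Some (succ0 s)) \<in> improvements V E own c d \<sigma> \<longleftrightarrow> (Some s, None) \<notin> \<sigma> \<or> prof_pos d M"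
    and "(Some s, None) \<in> strict_improvements V E own c d \<sigma> \<longleftrightarrow> (Some s, None) \<notin> \<sigma> \<and> \<not> prof_pos d M"
    and "(Some s, Some (succ0 s)) \<in> strict_improvements V E own c d \<sigma> \<longleftrightarrow> (Some s, Some (succ0 s)) \<notin> \<sigma> \<and> prof_pos d M"
proof -
  let ?u = "Fin (unitv (c s))" and ?stop = "(Some s, None) \<in> \<sigma>" and ?cont = "(Some s, Some (succ0 s)) \<in> \<sigma>"
  have eq: "prof_eq d (val \<sigma> (Some s)) (local_val \<sigma> s M)" unfolding M_def using val_V0[OF \<sigma> s] .
  have E0: "(Some s, None) \<in> E0 V E own" "(Some s, Some (succ0 s)) \<in> E0 V E own" using s E0_iff by blast+
  have val_None: "val \<sigma> None = Fin (\<lambda>_. 0)" unfolding valuation_def by simp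
  have "?stop \<or> ?cont" using \<sigma> s strategy0_edge[OF \<sigma>] unfolding is_strategy_def by blast
  have imp: "(Some s, None) \<in> improvements V E own c d \<sigma> \<longleftrightarrow> prof_le d (local_val \<sigma> s M) ?u"
    "(Some s, Some (succ0 s)) \<in> improvements V E own c d \<sigma> \<longleftrightarrow> prof_le d (local_val \<sigma> s M) (prof_add ?u M)"
    "(Some s, None) \<in> strict_improvements V E own c d \<sigma> \<longleftrightarrow> prof_less d (local_val \<sigma> s M) ?u"
    "(Some s, Some (succ0 s)) \<in> strict_improvements V E own c d \<sigma> \<longleftrightarrow> prof_less d (local_val \<sigma> s M) (prof_add ?u M)"
    unfolding improvements_def strict_improvements_def M_def
    using E0 prof_le_cong_left[OF eq] prof_less_cong_left[OF eq] val_None by (simp_all add: M_def)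
  have "(prof_le d (local_val \<sigma> s M) ?u \<longleftrightarrow> \<not> ?cont \<or> \<not> prof_pos d M)
    \<and> (prof_le d (local_val \<sigma> s M) (prof_add ?u M) \<longleftrightarrow> \<not> ?stop \<or> prof_pos d M)
    \<and> (prof_less d (local_val \<sigma> s M) ?u \<longleftrightarrow> \<not> ?stop \<and> \<not> prof_pos d M)
    \<and> (prof_less d (local_val \<sigma> s M) (prof_add ?u M) \<longleftrightarrow> \<not> ?cont \<and> prof_pos d M)"
  proof (cases "prof_pos d M")
    case True
    then have "prof_less d ?u (prof_add ?u M)" by (rule prof_pos_add)
    then show ?thesis using True \<open>?stop \<or> ?cont\<close> prof_less_asym prof_less_irrefl prof_le_refl
      unfolding local_val_def not_prof_le[symmetric] by auto
  next
    case False
    then have "prof_neg d M" using val_sign(1)[OF \<sigma> succ0_V[OF s]] unfolding M_def by blast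
    then have "prof_less d (prof_add ?u M) ?u" by (rule prof_neg_add)
    then show ?thesis using False \<open>?stop \<or> ?cont\<close> prof_less_asym prof_less_irrefl prof_le_refl
      unfolding local_val_def not_prof_le[symmetric] by auto
  qed
  then show "(Some s, None) \<in> improvements V E own c d \<sigma> \<longleftrightarrow> \<not> ?cont \<or> \<not> prof_pos d M"
    and "(Some s, Some (succ0 s)) \<in> improvements V E own c d \<sigma> \<longleftrightarrow> \<not> ?stop \<or> prof_pos d M"
    and "(Some s, None) \<in> strict_improvements V E own c d \<sigma> \<longleftrightarrow> \<not> ?stop \<and> \<not> prof_pos d M"
    and "(Some s, Some (succ0 s)) \<in> strict_improvements V E own c d \<sigma> \<longleftrightarrow> \<not> ?cont \<and> prof_pos d M"
    unfolding imp by blast+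
qed

definition cont_strategy :: "'v set \<Rightarrow> 'v set \<Rightarrow> ('v option \<times> 'v option) set" where
  "cont_strategy A B = {(Some s, Some (succ0 s)) | s. s \<in> B} \<union> {(Some s, None) | s. s \<in> V0 - A}"

lemma stop_in_cont_strategy: "(Some s, None) \<in> cont_strategy A B \<longleftrightarrow> s \<in> V0 - A"
  unfolding cont_strategy_def by simp

lemma cont_in_cont_strategy: "(Some s, Some (succ0 s)) \<in> cont_strategy A B \<longleftrightarrow> s \<in> B"
  unfolding cont_strategy_def by simp

lemma strategy0_cont_strategy:
  assumes "A \<subseteq> B" "B \<subseteq> V0"
  shows "strategy0 (cont_strategy A B)"
  unfolding is_strategy_def
proof (intro conjI ballI)
  have "cont_strategy A B \<subseteq> E0 V E own"
  proof
    fix e assume "e \<in> cont_strategy A B"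
    then obtain s where "s \<in> B \<and> e = (Some s, Some (succ0 s)) \<or> s \<in> V0 \<and> e = (Some s, None)"
      unfolding cont_strategy_def by blast
    then have "s \<in> V0" "e = (Some s, Some (succ0 s)) \<or> e = (Some s, None)" using assms(2) by blast+
    then show "e \<in> E0 V E own" using E0_iff by blast
  qed
  then show "cont_strategy A B \<subseteq> (if 0 = 0 then E0 V E own else E1 V E own)" by simp
  fix s assume "s \<in> V0"
  show "\<exists>t. (Some s, t) \<in> cont_strategy A B"
  proof (cases "s \<in> A")
    case True
    then have "(Some s, Some (succ0 s)) \<in> cont_strategy A B"
      using assms(1) cont_in_cont_strategy by (simp add: subset_iff)
    then show ?thesis by blast
  next
    case False
    then have "(Some s, None) \<in> cont_strategy A B" using \<open>s \<in> V0\<close> stop_in_cont_strategy by simp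
    then show ?thesis by blast
  qed
qed

definition profitable :: "('v option \<times> 'v option) set \<Rightarrow> 'v set" where
  "profitable \<sigma> = {s \<in> V0. succ0 s \<in> positive_vertices \<sigma>}"

lemma profitable_iff: "strategy0 \<sigma> \<Longrightarrow> s \<in> V0 \<Longrightarrow> s \<in> profitable \<sigma> \<longleftrightarrow> prof_pos d (val \<sigma> (Some (succ0 s)))"
  unfolding profitable_def using val_sign(2) succ0_V by blast

lemma E0_cases:
  assumes "(x, t) \<in> E0 V E own"
  obtains s where "s \<in> V0" "x = Some s" "t = None" | s where "s \<in> V0" "x = Some s" "t = Some (succ0 s)"
proof -
  obtain s where "s \<in> V0" "x = Some s" "t = None \<or> t = Some (succ0 s)"
    using assms unfolding E0_iff by blast
  then show ?thesis using that by blast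
qed

lemma improvements_cont_strategy:
  assumes AB: "A \<subseteq> B" "B \<subseteq> V0" and B: "B \<subseteq> profitable (cont_strategy A B)"
  shows "improvements V E own c d (cont_strategy A B) = cont_strategy B (profitable (cont_strategy A B))"
proof -
  let ?\<sigma> = "cont_strategy A B" and ?X = "profitable (cont_strategy A B)"
  note \<sigma> = strategy0_cont_strategy[OF AB]
  have "?X \<subseteq> V0" unfolding profitable_def by blast
  then have "cont_strategy B ?X \<subseteq> E0 V E own"
    using strategy0_cont_strategy[OF B] unfolding is_strategy_def by simp
  moreover have "improvements V E own c d ?\<sigma> \<subseteq> E0 V E own" unfolding improvements_def by auto
  moreover have "(x, t) \<in> improvements V E own c d ?\<sigma> \<longleftrightarrow> (x, t) \<in> cont_strategy B ?X"
    if "(x, t) \<in> E0 V E own" for x t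
    using that
  proof (cases rule: E0_cases)
    case (1 s)
    then show ?thesis using improvement_V0_iff(1)[OF \<sigma> \<open>s \<in> V0\<close>] profitable_iff[OF \<sigma> \<open>s \<in> V0\<close>]
      cont_in_cont_strategy[of s A B] stop_in_cont_strategy[of s B ?X] B by auto
  next
    case (2 s)
    then show ?thesis using improvement_V0_iff(2)[OF \<sigma> \<open>s \<in> V0\<close>] profitable_iff[OF \<sigma> \<open>s \<in> V0\<close>]
      stop_in_cont_strategy[of s A B] cont_in_cont_strategy[of s B ?X] AB B by auto
  qed
  ultimately show ?thesis by auto
qed

lemma strict_improvements_cont_strategy:
  assumes AB: "A \<subseteq> B" "B \<subseteq> V0" and B: "B \<subseteq> profitable (cont_strategy A B)"
  shows "strict_improvements V E own c d (cont_strategy A B) =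
      {(Some s, Some (succ0 s)) | s. s \<in> profitable (cont_strategy A B) - B}"
proof -
  let ?\<sigma> = "cont_strategy A B" and ?X = "profitable (cont_strategy A B)"
  note \<sigma> = strategy0_cont_strategy[OF AB]
  have "{(Some s, Some (succ0 s)) | s. s \<in> ?X - B} \<subseteq> E0 V E own"
    using E0_iff unfolding profitable_def by auto
  moreover have "strict_improvements V E own c d ?\<sigma> \<subseteq> E0 V E own"
    unfolding strict_improvements_def by auto
  moreover have "(x, t) \<in> strict_improvements V E own c d ?\<sigma> \<longleftrightarrow>
      (x, t) \<in> {(Some s, Some (succ0 s)) | s. s \<in> ?X - B}"
    if "(x, t) \<in> E0 V E own" for x t
    using that
  proof (cases rule: E0_cases)
    case (1 s)
    then show ?thesis using improvement_V0_iff(3)[OF \<sigma> \<open>s \<in> V0\<close>] profitable_iff[OF \<sigma> \<open>s \<in> V0\<close>]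
      stop_in_cont_strategy[of s A B] AB B by auto
  next
    case (2 s)
    then show ?thesis using improvement_V0_iff(4)[OF \<sigma> \<open>s \<in> V0\<close>] profitable_iff[OF \<sigma> \<open>s \<in> V0\<close>]
      cont_in_cont_strategy[of s A B] by auto
  qed
  ultimately show ?thesis by auto
qed

section \<open>Improvement steps keep positive vertices positive\<close>

lemma no_stop_in_strategy1: "strategy1 \<tau> \<Longrightarrow> (x, None) \<notin> \<tau>"
  using strategy1_edge by blast

lemma cont_if_no_stop:
  "strategy0 \<sigma> \<Longrightarrow> s \<in> V0 \<Longrightarrow> (Some s, None) \<notin> \<sigma> \<Longrightarrow> (Some s, Some (succ0 s)) \<in> \<sigma>"
  using strategy0_edge unfolding is_strategy_def by (metis option.inject)

lemma fin_play_ends_in_stop: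
  assumes \<sigma>: "strategy0 \<sigma>" and \<tau>: "strategy1 \<tau>" and v: "v \<in> V" and play: "fin_play (\<sigma> \<union> \<tau>) (Some v) xs"
  obtains ys s where "xs = ys @ [None]" "ys \<noteq> []" "hd ys = Some v" "set ys \<subseteq> Some ` V"
    "successively (edge_rel (\<sigma> \<union> \<tau>)) ys" "last ys = Some s" "s \<in> V0" "(Some s, None) \<in> \<sigma>"
proof -
  interpret play_graph V c d "\<sigma> \<union> \<tau>" using play_graph_strategies[OF \<sigma> \<tau>] .
  obtain ys s where ys: "xs = ys @ [None]" "ys \<noteq> []" "hd ys = Some v" "set ys \<subseteq> Some ` V"
    "successively (edge_rel (\<sigma> \<union> \<tau>)) ys" "last ys = Some s" "(Some s, None) \<in> \<sigma> \<union> \<tau>"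
    using fin_play_split[OF v play] by blast
  then have "(Some s, None) \<in> \<sigma>" using no_stop_in_strategy1[OF \<tau>] by blast
  moreover have "s \<in> V0" using strategy0_edge[OF \<sigma> \<open>(Some s, None) \<in> \<sigma>\<close>] by simp
  ultimately show ?thesis using that ys by blast
qed

context
  fixes \<sigma> \<sigma>' \<tau>
  assumes \<sigma>: "strategy0 \<sigma>" and \<sigma>': "strategy0 \<sigma>'" and \<tau>: "strategy1 \<tau>"
    and keep_cont: "\<forall>s\<in>V0. (Some s, Some (succ0 s)) \<in> \<sigma> \<longrightarrow> (Some s, Some (succ0 s)) \<in> \<sigma>'"
    and drop_stop: "\<forall>s\<in>V0. (Some s, None) \<in> \<sigma> \<and> (Some s, None) \<notin> \<sigma>' \<longrightarrow> succ0 s \<in> positive_vertices \<sigma>"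
begin

lemma inner_edge_kept: "(Some a, Some b) \<in> \<sigma> \<union> \<tau> \<Longrightarrow> (Some a, Some b) \<in> \<sigma>' \<union> \<tau>"
  using strategy0_edge[OF \<sigma>, of "Some a" "Some b"] keep_cont by auto

lemma inner_path_kept:
  assumes "set ys \<subseteq> Some ` V" "successively (edge_rel (\<sigma> \<union> \<tau>)) ys"
  shows "successively (edge_rel (\<sigma>' \<union> \<tau>)) ys"
  using assms(2) by (rule successively_mono) (use assms(1) inner_edge_kept in blast)

lemma inf_play_kept:
  assumes "w \<in> V" "inf_play (\<sigma> \<union> \<tau>) (Some w) f"
  shows "inf_play (\<sigma>' \<union> \<tau>) (Some w) f"
proof -
  have "f n \<in> Some ` V" for n
    using play_graph.inf_play_range[OF play_graph_strategies[OF \<sigma> \<tau>] assms] .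
  then show ?thesis using assms(2) inner_edge_kept unfolding inf_play_def by (metis imageE)
qed

lemma fin_play_kept:
  assumes "ys \<noteq> []" "set ys \<subseteq> Some ` V" "successively (edge_rel (\<sigma> \<union> \<tau>)) ys"
    "last ys = Some s" "(Some s, None) \<in> \<sigma>'"
  shows "fin_play (\<sigma>' \<union> \<tau>) (hd ys) (ys @ [None])"
proof -
  have "successively (edge_rel (\<sigma>' \<union> \<tau>)) (ys @ [None])"
    using inner_path_kept[OF assms(2,3)] assms(1,4,5) by (simp add: successively_append_iff)
  moreover have "(None, t) \<notin> \<sigma>' \<union> \<tau>" for t
    using play_graph.no_edge_from_None[OF play_graph_strategies[OF \<sigma>' \<tau>]] .
  ultimately show ?thesis using assms(1) unfolding fin_play_iff by simp
qed

definition loses_positivity :: "'v \<Rightarrow> bool" where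
  "loses_positivity w \<longleftrightarrow> w \<in> positive_vertices \<sigma> \<and> (\<forall>p\<in>profiles \<sigma>' \<tau> (Some w). \<not> prof_pos d p)"

lemma loses_positivity_step:
  assumes "loses_positivity w"
  shows "\<exists>ys y. ys \<noteq> [] \<and> hd ys = Some w \<and> set ys \<subseteq> Some ` V
    \<and> successively (edge_rel (\<sigma>' \<union> \<tau>)) (ys @ [y])
    \<and> even (Max ((\<lambda>x. c (the x)) ` set ys)) \<and> (\<exists>w'. y = Some w' \<and> loses_positivity w')"
proof -
  interpret G: play_graph V c d "\<sigma> \<union> \<tau>" using play_graph_strategies[OF \<sigma> \<tau>] .
  interpret G': play_graph V c d "\<sigma>' \<union> \<tau>" using play_graph_strategies[OF \<sigma>' \<tau>] .
  have w: "w \<in> V" and bad: "\<forall>p\<in>profiles \<sigma>' \<tau> (Some w). \<not> prof_pos d p"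
    using assms unfolding loses_positivity_def positive_vertices_def by blast+
  obtain p where p: "p \<in> profiles \<sigma> \<tau> (Some w)" "prof_pos d p"
    using assms \<tau> unfolding loses_positivity_def positive_vertices_def by blast
  from p(1) show ?thesis
  proof (cases rule: play_profilesE)
    case (2 f)
    then show ?thesis using inf_play_kept[OF w] bad p(2) play_profiles_infI by metis
  next
    case (1 xs)
    obtain ys s where ys: "xs = ys @ [None]" "ys \<noteq> []" "hd ys = Some w" "set ys \<subseteq> Some ` V"
      "successively (edge_rel (\<sigma> \<union> \<tau>)) ys" "last ys = Some s" "s \<in> V0" "(Some s, None) \<in> \<sigma>"
      using fin_play_ends_in_stop[OF \<sigma> \<tau> w 1(1)] by blast
    have ys': "successively (edge_rel (\<sigma>' \<union> \<tau>)) ys" using inner_path_kept ys(4,5) by blast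
    have colours: "path_colours c ys = path_colours c xs" "path_colours c ys = (\<lambda>x. c (the x)) ` set ys"
      using path_colours_the[OF ys(4)] by (simp_all add: ys(1) path_colours_append path_colours_def)
    have even: "even (Max (path_colours c ys))" using G.fin_play_sign(1)[OF w 1(1)] p(2) 1(2) colours by simp
    have "(Some s, None) \<notin> \<sigma>'"
    proof
      assume "(Some s, None) \<in> \<sigma>'"
      then have "fin_play (\<sigma>' \<union> \<tau>) (Some w) xs" using fin_play_kept[OF ys(2,4,5,6)] ys(1,3) by simp
      then show False using bad p(2) 1(2) play_profiles_finI by blast
    qed
    then have cont: "(Some s, Some (succ0 s)) \<in> \<sigma>'" using cont_if_no_stop[OF \<sigma>' ys(7)] by blast
    have link: "successively (edge_rel (\<sigma>' \<union> \<tau>)) (ys @ [Some (succ0 s)])"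
      using ys' ys(2,6) cont by (simp add: successively_append_iff)
    have "loses_positivity (succ0 s)"
      unfolding loses_positivity_def
    proof (intro conjI ballI notI)
      show "succ0 s \<in> positive_vertices \<sigma>" using drop_stop ys(7,8) \<open>(Some s, None) \<notin> \<sigma>'\<close> by blast
      fix q assume "q \<in> profiles \<sigma>' \<tau> (Some (succ0 s))" "prof_pos d q"
      then show False
        using G'.positive_prefix[OF ys(2,4) link even succ0_V[OF ys(7)]] bad ys(3) by auto
    qed
    then show ?thesis using link ys(2,3,4) even colours(2) by auto
  qed
qed

end

lemma positive_vertices_mono:
  assumes \<sigma>: "strategy0 \<sigma>" and \<sigma>': "strategy0 \<sigma>'"
    and keep_cont: "\<forall>s\<in>V0. (Some s, Some (succ0 s)) \<in> \<sigma> \<longrightarrow> (Some s, Some (succ0 s)) \<in> \<sigma>'"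
    and drop_stop: "\<forall>s\<in>V0. (Some s, None) \<in> \<sigma> \<and> (Some s, None) \<notin> \<sigma>' \<longrightarrow> succ0 s \<in> positive_vertices \<sigma>"
  shows "positive_vertices \<sigma> \<subseteq> positive_vertices \<sigma>'"
proof
  fix v assume v: "v \<in> positive_vertices \<sigma>"
  have "\<exists>p\<in>profiles \<sigma>' \<tau> (Some v). prof_pos d p" if \<tau>: "strategy1 \<tau>" for \<tau>
  proof (rule ccontr)
    note lost_def = loses_positivity_def[OF \<sigma> \<sigma>' \<tau> keep_cont drop_stop]
    assume no_pos: "\<not> ?thesis"
    then have "loses_positivity \<sigma> \<sigma>' \<tau> v" using v unfolding lost_def by blast
    then obtain f where "f 0 = Some v" "\<And>n. (f n, f (Suc n)) \<in> \<sigma>' \<union> \<tau>" "range f \<subseteq> Some ` V"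
      "even (Max (limit ((\<lambda>x. c (the x)) \<circ> f)))"
      using lasso_of_segments[of "Some ` V" "\<lambda>x. \<exists>w. x = Some w \<and> loses_positivity \<sigma> \<sigma>' \<tau> w" "Some v"]
        loses_positivity_step[OF \<sigma> \<sigma>' \<tau> keep_cont drop_stop] finite_V by blast
    then have "inf_play (\<sigma>' \<union> \<tau>) (Some v) f" "inf_prof c f = PosInf"
      unfolding inf_play_def inf_prof_limit by auto
    then show False using no_pos play_profiles_infI prof_pos_PosInf by metis
  qed
  then show "v \<in> positive_vertices \<sigma>'" using v unfolding positive_vertices_def by blast
qed

section \<open>Stable strategies are optimal\<close>

definition all_paths_won :: "'v set" where
  "all_paths_won = {v \<in> V. \<forall>g. g 0 = v \<and> (\<forall>i. (g i, g (Suc i)) \<in> E) \<longrightarrow> parity_win0 c g}"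

text \<open>Player 0 has no choice in the original arena, so any vertex she wins is won along every path.\<close>
lemma W0_subset_all_paths_won: "W0 V E own c \<subseteq> all_paths_won"
proof
  fix s assume "s \<in> W0 V E own c"
  then obtain g0 where s: "s \<in> V" and g0: "strategy0_hist V E own g0"
    "\<forall>f. consistent_play V E own g0 s f \<longrightarrow> parity_win0 c f"
    unfolding W0_def by blast
  have "parity_win0 c f" if f: "f 0 = s" "\<forall>i. (f i, f (Suc i)) \<in> E" for f
  proof -
    have fV: "f i \<in> V" for i using f s E_sub by (cases i) auto
    have "f (Suc i) = g0 (map f [0..<Suc i])" if "own (f i) = 0" for i
    proof -
      let ?h = "map f [0..<Suc i]"
      have "?h \<noteq> []" "set ?h \<subseteq> V" "last ?h = f i" using fV by auto
      then have "(f i, g0 ?h) \<in> E" using g0(1) that unfolding strategy0_hist_def by metis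
      moreover have "f i \<in> V0" using fV that unfolding Vown_def by simp
      ultimately show ?thesis using f(2) succ0_unique by metis
    qed
    then have "consistent_play V E own g0 s f" using f unfolding consistent_play_def by blast
    then show ?thesis using g0(2) by blast
  qed
  then show "s \<in> all_paths_won" unfolding all_paths_won_def using s by blast
qed

lemma all_paths_won_step: "v \<in> all_paths_won \<Longrightarrow> (v, w) \<in> E \<Longrightarrow> w \<in> all_paths_won"
proof -
  assume v: "v \<in> all_paths_won" and vw: "(v, w) \<in> E"
  have "parity_win0 c g" if g: "g 0 = w" "\<forall>i. (g i, g (Suc i)) \<in> E" for g
  proof -
    have "([v] \<frown> g) 0 = v" by simp
    moreover have "(([v] \<frown> g) i, ([v] \<frown> g) (Suc i)) \<in> E" for i
      using g vw by (cases i) simp_all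
    ultimately have "parity_win0 c ([v] \<frown> g)" using v unfolding all_paths_won_def by blast
    then show ?thesis unfolding parity_win0_limit by (simp only: comp_concat limit_conc)
  qed
  then show ?thesis unfolding all_paths_won_def using vw E_sub by blast
qed

lemma all_paths_won_path:
  "successively (edge_rel E) (x # xs) \<Longrightarrow> x \<in> all_paths_won \<Longrightarrow> last (x # xs) \<in> all_paths_won"
proof (induction xs arbitrary: x)
  case (Cons a xs)
  then have "a \<in> all_paths_won" using all_paths_won_step by simp
  then show ?case using Cons by simp
qed simp

lemma strategies_edge_in_E:
  "strategy0 \<sigma> \<Longrightarrow> strategy1 \<tau> \<Longrightarrow> (Some a, Some b) \<in> \<sigma> \<union> \<tau> \<Longrightarrow> (a, b) \<in> E"
  using strategy0_edge strategy1_edge succ0_edge by fastforce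

lemma inf_play_from_all_paths_won:
  assumes \<sigma>: "strategy0 \<sigma>" and \<tau>: "strategy1 \<tau>" and v: "v \<in> all_paths_won"
    and play: "inf_play (\<sigma> \<union> \<tau>) (Some v) f"
  shows "inf_prof c f = PosInf"
proof -
  interpret play_graph V c d "\<sigma> \<union> \<tau>" using play_graph_strategies[OF \<sigma> \<tau>] .
  have "v \<in> V" using v unfolding all_paths_won_def by blast
  then have "f n = Some (the (f n))" for n using inf_play_range[OF _ play, of n] by auto
  then have "(the (f n), the (f (Suc n))) \<in> E" for n
    using play strategies_edge_in_E[OF \<sigma> \<tau>] unfolding inf_play_def by metis
  moreover have "the (f 0) = v" using play unfolding inf_play_def by simp
  ultimately show ?thesis using v unfolding all_paths_won_def inf_prof_def by auto
qed

lemma fin_play_from_all_paths_won: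
  assumes \<sigma>: "strategy0 \<sigma>" and \<tau>: "strategy1 \<tau>" and v: "v \<in> all_paths_won"
    and play: "fin_play (\<sigma> \<union> \<tau>) (Some v) xs"
  obtains ys s where "xs = map Some ys @ [None]" "ys \<noteq> []" "hd ys = v" "set ys \<subseteq> V"
    "successively (edge_rel E) ys" "last ys = s" "s \<in> V0 \<inter> all_paths_won" "(Some s, None) \<in> \<sigma>"
proof -
  have "v \<in> V" using v unfolding all_paths_won_def by blast
  obtain zs s where zs: "xs = zs @ [None]" "zs \<noteq> []" "hd zs = Some v" "set zs \<subseteq> Some ` V"
    "successively (edge_rel (\<sigma> \<union> \<tau>)) zs" "last zs = Some s" "s \<in> V0" "(Some s, None) \<in> \<sigma>"
    using fin_play_ends_in_stop[OF \<sigma> \<tau> \<open>v \<in> V\<close> play] by blast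
  define ys where "ys = map the zs"
  have zs_ys: "zs = map Some ys" unfolding ys_def using zs(4) by (induction zs) auto
  have ys: "ys \<noteq> []" "hd ys = v" "set ys \<subseteq> V" "last ys = s"
    using zs(2,3,4,6) unfolding zs_ys by (auto simp: hd_map last_map)
  have "successively (edge_rel E) ys"
    using zs(5) strategies_edge_in_E[OF \<sigma> \<tau>] unfolding zs_ys successively_map by (rule successively_mono)
  moreover have "ys = v # tl ys" using ys(1,2) by (cases ys) auto
  then have "s \<in> all_paths_won"
    using all_paths_won_path[of v "tl ys"] calculation ys(4) v by metis
  ultimately show ?thesis using that zs(1,7,8) ys zs_ys by blast
qed

lemma cont_strategy_shrink: "A \<subseteq> B \<Longrightarrow> cont_strategy B B \<subseteq> cont_strategy A B"
  unfolding cont_strategy_def by blast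

text \<open>Where a won vertex stops, player 1 can force a play dominated by an odd colour to a
  further such vertex.\<close>
lemma stable_odd_segment:
  assumes AB: "A \<subseteq> B" "B \<subseteq> V0" and stable: "profitable (cont_strategy A B) \<subseteq> B"
    and s: "s \<in> V0 \<inter> all_paths_won - B"
  shows "\<exists>ys s'. ys \<noteq> [] \<and> hd ys = succ0 s \<and> set ys \<subseteq> V \<and> successively (edge_rel E) (ys @ [succ0 s'])
      \<and> odd (Max (c ` set ys)) \<and> s' \<in> V0 \<inter> all_paths_won - B"
proof -
  let ?\<sigma> = "cont_strategy A B" and ?\<sigma>B = "cont_strategy B B"
  note \<sigma> = strategy0_cont_strategy[OF AB] and \<sigma>B = strategy0_cont_strategy[OF order_refl AB(2)]
  have s_V0: "s \<in> V0" using s by blast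
  have "succ0 s \<notin> positive_vertices ?\<sigma>" using s stable unfolding profitable_def by blast
  then obtain \<tau> where \<tau>: "strategy1 \<tau>" and no_pos: "\<forall>p\<in>profiles ?\<sigma> \<tau> (Some (succ0 s)). \<not> prof_pos d p"
    using succ0_V[OF s_V0] unfolding positive_vertices_def by blast
  have won: "succ0 s \<in> all_paths_won" using all_paths_won_step[OF _ succ0_edge[OF s_V0]] s by blast
  have sub: "?\<sigma>B \<union> \<tau> \<subseteq> ?\<sigma> \<union> \<tau>" using cont_strategy_shrink[OF AB(1)] by blast
  interpret G: play_graph V c d "?\<sigma> \<union> \<tau>" using play_graph_strategies[OF \<sigma> \<tau>] .
  consider xs where "fin_play (?\<sigma>B \<union> \<tau>) (Some (succ0 s)) xs"
    | f where "inf_play (?\<sigma>B \<union> \<tau>) (Some (succ0 s)) f"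
    using play_exists by blast
  then show ?thesis
  proof cases
    case (1 xs)
    obtain ys s' where ys: "xs = map Some ys @ [None]" "ys \<noteq> []" "hd ys = succ0 s" "set ys \<subseteq> V"
      "successively (edge_rel E) ys" "last ys = s'" "s' \<in> V0 \<inter> all_paths_won" "(Some s', None) \<in> ?\<sigma>B"
      using fin_play_from_all_paths_won[OF \<sigma>B \<tau> won 1] by blast
    have "fin_play (?\<sigma> \<union> \<tau>) (Some (succ0 s)) xs"
      using fin_play_mono[OF sub 1] G.no_edge_from_None ys(1) by simp
    then have "odd (Max (path_colours c xs))"
      using G.fin_play_sign(1)[OF succ0_V[OF s_V0]] no_pos play_profiles_finI by blast
    moreover have "path_colours c xs = c ` set ys" unfolding ys(1) path_colours_def by auto
    moreover have "s' \<notin> B" using ys(8) stop_in_cont_strategy by blast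
    moreover have "successively (edge_rel E) (ys @ [succ0 s'])"
      using ys(2,5,6,7) succ0_edge by (simp add: successively_append_iff)
    ultimately show ?thesis using ys(2,3,4,7) by (intro exI[of _ ys] exI[of _ s']) simp
  next
    case (2 f)
    then have "inf_prof c f = PosInf" using inf_play_from_all_paths_won[OF \<sigma>B \<tau> won] by blast
    moreover have "inf_play (?\<sigma> \<union> \<tau>) (Some (succ0 s)) f" using inf_play_mono[OF sub 2] .
    ultimately show ?thesis using no_pos play_profiles_infI prof_pos_PosInf by metis
  qed
qed

lemma stable_cont_set_covers_won:
  assumes AB: "A \<subseteq> B" "B \<subseteq> V0" and stable: "profitable (cont_strategy A B) \<subseteq> B"
  shows "V0 \<inter> all_paths_won \<subseteq> B"
proof (rule ccontr)
  let ?P = "\<lambda>x. \<exists>s\<in>V0 \<inter> all_paths_won - B. x = succ0 s"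
  have step: "\<exists>ys y. ys \<noteq> [] \<and> hd ys = x \<and> set ys \<subseteq> V \<and> successively (edge_rel E) (ys @ [y])
      \<and> odd (Max (c ` set ys)) \<and> ?P y" if x: "?P x" for x
  proof -
    obtain s where s: "s \<in> V0 \<inter> all_paths_won - B" "x = succ0 s" using x by blast
    then obtain ys s' where "ys \<noteq> []" "hd ys = x" "set ys \<subseteq> V" "successively (edge_rel E) (ys @ [succ0 s'])"
      "odd (Max (c ` set ys))" "s' \<in> V0 \<inter> all_paths_won - B"
      using stable_odd_segment[OF AB stable s(1)] by blast
    then show ?thesis by (intro exI[of _ ys] exI[of _ "succ0 s'"]) blast
  qed
  assume "\<not> V0 \<inter> all_paths_won \<subseteq> B"
  then obtain s0 where s0: "s0 \<in> V0 \<inter> all_paths_won - B" by blast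
  then have "?P (succ0 s0)" by blast
  then obtain g where "g 0 = succ0 s0" "\<And>n. (g n, g (Suc n)) \<in> E" "range g \<subseteq> V"
    "odd (Max (limit (c \<circ> g)))"
    using lasso_of_segments[OF finite_V, where P = ?P and R = "edge_rel E" and Q = odd and col = c]
      step by blast
  moreover have "succ0 s0 \<in> all_paths_won" using s0 all_paths_won_step succ0_edge by blast
  ultimately show False unfolding all_paths_won_def parity_win0_limit by blast
qed

lemma stable_cont_strategy_optimal:
  assumes AB: "A \<subseteq> B" "B \<subseteq> V0" and stable: "profitable (cont_strategy A B) \<subseteq> B"
  shows "optimal_winning V E own c (cont_strategy A B)"
  unfolding optimal_winning_def wins_with_def
proof
  let ?\<sigma>B = "cont_strategy B B"
  note \<sigma>B = strategy0_cont_strategy[OF order_refl AB(2)]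
  fix s assume "s \<in> W0 V E own c"
  then have s: "s \<in> all_paths_won" using W0_subset_all_paths_won by blast
  have "\<not> fin_play (?\<sigma>B \<union> \<tau>) (Some s) xs" if \<tau>: "strategy1 \<tau>" for \<tau> xs
  proof
    assume "fin_play (?\<sigma>B \<union> \<tau>) (Some s) xs"
    then obtain ys s' where "s' \<in> V0 \<inter> all_paths_won" "(Some s', None) \<in> ?\<sigma>B"
      by (rule fin_play_from_all_paths_won[OF \<sigma>B \<tau> s])
    moreover have "V0 \<inter> all_paths_won \<subseteq> B" using stable_cont_set_covers_won[OF AB stable] .
    ultimately show False using stop_in_cont_strategy[of s' B B] by blast
  qed
  moreover have "inf_prof c f = PosInf" if "strategy1 \<tau>" "inf_play (?\<sigma>B \<union> \<tau>) (Some s) f" for \<tau> f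
    using inf_play_from_all_paths_won[OF \<sigma>B that(1) s that(2)] .
  ultimately show "\<exists>\<sigma>'. \<sigma>' \<subseteq> cont_strategy A B \<and> strategy0 \<sigma>' \<and>
      (\<forall>\<tau>. strategy1 \<tau> \<longrightarrow> (\<forall>xs. \<not> fin_play (\<sigma>' \<union> \<tau>) (Some s) xs) \<and>
        (\<forall>f. inf_play (\<sigma>' \<union> \<tau>) (Some s) f \<longrightarrow> inf_prof c f = PosInf))"
    using cont_strategy_shrink[OF AB(1)] \<sigma>B by blast
qed

section \<open>The iteration\<close>

abbreviation "sigma \<equiv> sigma_iter V E own c d"

definition cont_set :: "nat \<Rightarrow> 'v set" where
  "cont_set i = (case i of 0 \<Rightarrow> {} | Suc j \<Rightarrow> profitable (sigma j))"

lemma cont_set_0 [simp]: "cont_set 0 = {}"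
  and cont_set_Suc [simp]: "cont_set (Suc i) = profitable (sigma i)"
  unfolding cont_set_def by simp_all

lemma cont_set_V0: "cont_set i \<subseteq> V0"
  unfolding cont_set_def profitable_def by (auto split: nat.split)

lemma finite_V0: "finite V0"
  using finite_V unfolding Vown_def by simp

lemma sigma_iter_cont_strategy:
  "sigma i = cont_strategy (cont_set (i - 1)) (cont_set i)
    \<and> cont_set (i - 1) \<subseteq> cont_set i \<and> cont_set i \<subseteq> cont_set (Suc i)"
proof (induction i)
  case 0
  have "sigma 0 = cont_strategy {} {}" unfolding sigma_iter_def cont_strategy_def by auto
  then show ?case by simp
next
  case (Suc i)
  let ?A = "cont_set (i - 1)" and ?B = "cont_set i" and ?C = "cont_set (Suc i)"
  have IH: "sigma i = cont_strategy ?A ?B" "?A \<subseteq> ?B" "?B \<subseteq> ?C" using Suc by blast+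
  have BC: "?B \<subseteq> profitable (cont_strategy ?A ?B)" using IH by simp
  have "sigma (Suc i) = improvements V E own c d (sigma i)" unfolding sigma_iter_def by simp
  then have step: "sigma (Suc i) = cont_strategy ?B ?C"
    using improvements_cont_strategy[OF IH(2) cont_set_V0 BC] by (simp add: IH(1))
  have "positive_vertices (sigma i) \<subseteq> positive_vertices (sigma (Suc i))"
  proof (rule positive_vertices_mono)
    show "strategy0 (sigma i)" unfolding IH(1) using IH(2) cont_set_V0 by (rule strategy0_cont_strategy)
    show "strategy0 (sigma (Suc i))" unfolding step using IH(3) cont_set_V0 by (rule strategy0_cont_strategy)
    show "\<forall>s\<in>V0. (Some s, Some (succ0 s)) \<in> sigma i \<longrightarrow> (Some s, Some (succ0 s)) \<in> sigma (Suc i)"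
      unfolding IH(1) step using IH(3) cont_in_cont_strategy by blast
    show "\<forall>s\<in>V0. (Some s, None) \<in> sigma i \<and> (Some s, None) \<notin> sigma (Suc i) \<longrightarrow>
        succ0 s \<in> positive_vertices (sigma i)"
    proof (intro ballI impI)
      fix s assume "s \<in> V0" and "(Some s, None) \<in> sigma i \<and> (Some s, None) \<notin> sigma (Suc i)"
      then have "s \<in> ?B" unfolding step using stop_in_cont_strategy[of s ?B ?C] by simp
      then show "succ0 s \<in> positive_vertices (sigma i)"
        using IH(3) unfolding cont_set_Suc profitable_def by blast
    qed
  qed
  then have "?C \<subseteq> cont_set (Suc (Suc i))" unfolding cont_set_Suc profitable_def by blast
  then show ?case using step IH(3) by simp
qed

lemma strict_improvements_empty_iff:
  "strict_improvements V E own c d (sigma i) = {} \<longleftrightarrow> cont_set (Suc i) = cont_set i"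
proof -
  have IH: "sigma i = cont_strategy (cont_set (i - 1)) (cont_set i)"
    "cont_set (i - 1) \<subseteq> cont_set i" "cont_set i \<subseteq> cont_set (Suc i)"
    using sigma_iter_cont_strategy by blast+
  then have "cont_set i \<subseteq> profitable (cont_strategy (cont_set (i - 1)) (cont_set i))" by simp
  then have "strict_improvements V E own c d (sigma i) =
      {(Some s, Some (succ0 s)) | s. s \<in> cont_set (Suc i) - cont_set i}"
    using strict_improvements_cont_strategy[OF IH(2) cont_set_V0] IH(1) by simp
  then show ?thesis using IH(3) by auto
qed

lemma card_cont_set: "(\<forall>j<i. cont_set (Suc j) \<noteq> cont_set j) \<Longrightarrow> i \<le> card (cont_set i)"
proof (induction i)
  case (Suc i)
  have "cont_set i \<subset> cont_set (Suc i)" using Suc.prems sigma_iter_cont_strategy[of i] by blast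
  moreover have "finite (cont_set (Suc i))" using finite_subset[OF cont_set_V0 finite_V0] .
  ultimately have "card (cont_set i) < card (cont_set (Suc i))" by (rule psubset_card_mono[rotated])
  then show ?case using Suc by simp
qed simp

lemma iteration_terminates:
  "\<exists>l. strict_improvements V E own c d (sigma l) = {}
     \<and> (\<forall>i<l. strict_improvements V E own c d (sigma i) \<noteq> {})
     \<and> l \<le> card V0 \<and> optimal_winning V E own c (sigma l)"
proof -
  have card_le: "card (cont_set i) \<le> card V0" for i using card_mono[OF finite_V0 cont_set_V0] .
  have "\<exists>j. cont_set (Suc j) = cont_set j"
    using card_cont_set[of "Suc (card V0)"] card_le[of "Suc (card V0)"] by fastforce
  then obtain l where l: "cont_set (Suc l) = cont_set l" "\<forall>i<l. cont_set (Suc i) \<noteq> cont_set i"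
    using exists_least_iff[of "\<lambda>j. cont_set (Suc j) = cont_set j"] by blast
  have "sigma l = cont_strategy (cont_set (l - 1)) (cont_set l)" "cont_set (l - 1) \<subseteq> cont_set l"
    using sigma_iter_cont_strategy by blast+
  then have "optimal_winning V E own c (sigma l)"
    using stable_cont_strategy_optimal[OF _ cont_set_V0] l(1) by simp
  moreover have "l \<le> card V0" using card_cont_set[OF l(2)] card_le[of l] by simp
  ultimately show ?thesis using l strict_improvements_empty_iff by blast
qed

end

lemma linear_le_exponential: "real n \<le> 3 * 1.724 ^ n"
proof -
  have "1 + real n * 0.724 \<le> (1 + 0.724 :: real) ^ n" by (rule Bernoulli_inequality) simp
  then show ?thesis by simp
qed

theorem mainTheorem3:
  fixes V :: "'v set" and E :: "('v \<times> 'v) set" and own c :: "'v \<Rightarrow> nat" and d :: nat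
  assumes "arena V E own c d"
    and "standing_assumption V E own c"
    and "\<forall>s \<in> Vown V own 0. card (Ebot V E own `` {Some s}) \<le> 2"
  shows "\<exists>l. strict_improvements V E own c d (sigma_iter V E own c d l) = {}
           \<and> (\<forall>i < l. strict_improvements V E own c d (sigma_iter V E own c d i) \<noteq> {})
           \<and> real l \<le> 3 * 1.724 ^ card (Vown V own 0)
           \<and> optimal_winning V E own c (sigma_iter V E own c d l)"
proof -
  interpret binary_escape_arena V E own c d using assms(1,3) by unfold_locales
  obtain l where "strict_improvements V E own c d (sigma l) = {}"
    "\<forall>i<l. strict_improvements V E own c d (sigma i) \<noteq> {}"
    "l \<le> card V0" "optimal_winning V E own c (sigma l)"
    using iteration_terminates by blast
  moreover have "real l \<le> 3 * 1.724 ^ card V0"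
    using \<open>l \<le> card V0\<close> linear_le_exponential[of "card V0"] by linarith
  ultimately show ?thesis by blast
qed

end
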